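(* Consider the local time-stepping Adams–Bashforth scheme of order $k$ described in the context, and let $\mathbf{y}(t)$ be an exact solution of $\frac{d\mathbf{y}}{dt}=\mathbf{D}(\mathbf{y})$ with $\mathbf{D}$ sufficiently smooth. Fix a step index $n$ and consider the family of step patterns obtained by scaling all the time differences among $\tilde t_{n+1},\tilde t_n,\ldots,\tilde t_{n-(k-1)}$ and $t^s_{m^s(n)},\ldots,t^s_{m^s(n)-(k-1)}$ ($s=1,\ldots,S$) by a parameter $h>0$ (with the pattern otherwise fixed). Suppose that the past values satisfy $\mathbf{y}^s_q=\mathbf{y}^s(t^s_q)+O(h^k)$ for all $s$ and all $q\in\{m^s(n)-(k-1),\ldots,m^s(n)\}$. Then $\Delta\tilde{\mathbf{y}}_n=\mathbf{y}(\tilde t_{n+1})-\mathbf{y}(\tilde t_n)+O(h^{k+1})$ as $h\to0$.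
   Context: We solve an autonomous system $\frac{d\mathbf{y}}{dt}=\mathbf{D}(\mathbf{y})$, $\mathbf{y}\in\mathbb{R}^N$. The components of $\mathbf{y}$ are partitioned into $S$ sets, $\mathbf{y}=(\mathbf{y}^1,\ldots,\mathbf{y}^S)$. Set $s$ is evaluated at strictly increasing times $t^s_0<t^s_1<\cdots$, and $\mathbf{y}^s_q$ denotes the numerical value of $\mathbf{y}^s$ at time $t^s_q$. Let $\tilde t_0<\tilde t_1<\cdots$ be the increasing enumeration of the union of all evaluation times of all sets, $\Delta\tilde t_n=\tilde t_{n+1}-\tilde t_n$. For each $s,n$ let $m^s(n)$ be the index with $t^s_{m^s(n)}\le\tilde t_n<t^s_{m^s(n)+1}$. Lagrange polynomials: $\ell_j(t;\tau_0,\ldots,\tau_{k-1})=\prod_{i\ne j}\frac{t-\tau_i}{\tau_j-\tau_i}$. Adams–Bashforth coefficients: $\tilde\alpha_{ni}=\frac{1}{\Delta\tilde t_n}\int_{\tilde t_n}^{\tilde t_{n+1}}\ell_i(t;\tilde t_n,\ldots,\tilde t_{n-(k-1)})\,dt$. The scheme's substep is $\Delta\tilde{\mathbf{y}}_n=\sum_{q^1=m^1(n)-(k-1)}^{m^1(n)}\cdots\sum_{q^S=m^S(n)-(k-1)}^{m^S(n)}\beta_{n;q^1\cdots q^S}\,\mathbf{D}(\mathbf{y}^1_{q^1},\ldots,\mathbf{y}^S_{q^S})$ with $\beta_{n;q^1\cdots q^S}=\Delta\tilde t_n\sum_{i=0}^{k-1}\tilde\alpha_{ni}\prod_{s=1}^S\ell_{m^s(n)-q^s}\big(\tilde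 t_{n-i};t^s_{m^s(n)},\ldots,t^s_{m^s(n)-(k-1)}\big)$. *)

theory Defs
  imports "HOL-Analysis.Analysis" "HOL-Library.Landau_Symbols"
begin

definition partial_dir :: "'n::finite \<Rightarrow> (real^'n \<Rightarrow> real^'m) \<Rightarrow> real^'n \<Rightarrow> real^'m" where
  "partial_dir i f x = vector_derivative (\<lambda>t. f (x + t *\<^sub>R axis i 1)) (at 0)"

definition smooth_vf :: "(real^'n::finite \<Rightarrow> real^'m) \<Rightarrow> bool" where
  "smooth_vf f \<longleftrightarrow> (\<forall>ds :: 'n list.
     continuous_on UNIV (fold partial_dir ds f) \<and>
     (\<forall>x i. (\<lambda>t. fold partial_dir ds f (x + t *\<^sub>R axis i 1)) differentiable (at 0)))"

definition lagr :: "nat \<Rightarrow> (nat \<Rightarrow> real) \<Rightarrow> nat \<Rightarrow> real \<Rightarrow> real" where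
  "lagr k tau j t = (\<Prod>i\<in>{..<k} - {j}. (t - tau i) / (tau j - tau i))"

text \<open>Adams--Bashforth coefficient alpha~_{ni}; tnext = t~_{n+1}, tpast i = t~_{n-i}.\<close>
definition ab_alpha :: "nat \<Rightarrow> real \<Rightarrow> (nat \<Rightarrow> real) \<Rightarrow> nat \<Rightarrow> real" where
  "ab_alpha k tnext tpast i =
     (1 / (tnext - tpast 0)) * integral {tpast 0..tnext} (lagr k tpast i)"

text \<open>beta_{n;q^1...q^S}, with J s = m^s(n) - q^s and tset s j = t^s_{m^s(n)-j}.\<close>
definition lts_beta :: "nat \<Rightarrow> real \<Rightarrow> (nat \<Rightarrow> real) \<Rightarrow> ('s::finite \<Rightarrow> nat \<Rightarrow> real)
    \<Rightarrow> ('s \<Rightarrow> nat) \<Rightarrow> real" where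
  "lts_beta k tnext tpast tset J =
     (tnext - tpast 0) * (\<Sum>i<k. ab_alpha k tnext tpast i *
        (\<Prod>s\<in>UNIV. lagr k (tset s) (J s) (tpast i)))"

text \<open>The substep Delta y~_n. blk i is the set containing component i;
  Y s j is (a vector whose components in set s are) y^s_{m^s(n)-j}.\<close>
definition lts_substep :: "nat \<Rightarrow> ('n::finite \<Rightarrow> 's::finite) \<Rightarrow> (real^'n \<Rightarrow> real^'n)
    \<Rightarrow> real \<Rightarrow> (nat \<Rightarrow> real) \<Rightarrow> ('s \<Rightarrow> nat \<Rightarrow> real) \<Rightarrow> ('s \<Rightarrow> nat \<Rightarrow> real^'n) \<Rightarrow> real^'n" where
  "lts_substep k blk D tnext tpast tset Y =
     (\<Sum>J\<in>{J. \<forall>s. J s < k}. lts_beta k tnext tpast tset J *\<^sub>R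
         D (\<chi> i. Y (blk i) (J (blk i)) $ i))"

end

(*
  Expanding beta, the substep is a quadrature rule: a sum over i of the integrals of the Lagrange
  polynomials l_i, which are O(h), times inner sums over multi-indices J of
  prod_s l^s_(J s)(t~_(n-i)) D(Y_J), where block s of Y_J is the past value y^s_(m^s(n) - J s).
  Replacing the past values by exact ones changes each inner sum by O(h^k), because D is Lipschitz
  near the solution. With exact values the inner sum is the tensor-product Lagrange interpolant of
  (t^1, ..., t^S) |-> D(y^1(t^1), ..., y^S(t^S)) at the diagonal point (t~_(n-i), ..., t~_(n-i));
  moving one coordinate at a time telescopes its error into one-dimensional interpolation errors,
  each O(h^k) by Taylor's theorem, since all t-derivatives of D along the exact solution are bounded.
  What remains, sum_i (integral of l_i) D(y(t~_(n-i))), is the integral over [t~_n, t~_(n+1)] of the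
  interpolant of D(y(t)) = y'(t), hence y(t~_(n+1)) - y(t~_n) + O(h^(k+1)).
*)

theory Submission
  imports Defs "HOL-Computational_Algebra.Polynomial"
begin

lemma ex_common_bound_finite:
  fixes P :: "'i \<Rightarrow> real \<Rightarrow> bool"
  assumes "finite I" and "\<And>i. i \<in> I \<Longrightarrow> \<exists>M. P i M"
    and mono: "\<And>i M M'. P i M \<Longrightarrow> M \<le> M' \<Longrightarrow> P i M'"
  shows "\<exists>M. \<forall>i\<in>I. P i M"
  using assms(1,2)
proof (induction I rule: finite_induct)
  case (insert i I)
  then obtain M M' where "\<forall>i\<in>I. P i M" "P i M'" by blast
  then have "\<forall>i'\<in>insert i I. P i' (max M M')" using mono by (metis insert_iff max.cobounded1 max.cobounded2)
  then show ?case ..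
qed simp

lemma bigo_finite_family:
  assumes "finite P" and "\<forall>p\<in>P. f p \<in> O[F](g)"
  shows "\<exists>C. \<forall>\<^sub>F x in F. \<forall>p\<in>P. norm (f p x) \<le> C * norm (g x)"
proof -
  have "\<exists>C. \<forall>p\<in>P. \<forall>\<^sub>F x in F. norm (f p x) \<le> C * norm (g x)"
  proof (rule ex_common_bound_finite[OF assms(1)])
    show "\<exists>C. \<forall>\<^sub>F x in F. norm (f p x) \<le> C * norm (g x)" if "p \<in> P" for p
      using assms(2) that by (auto elim: landau_o.bigE)
    show "\<forall>\<^sub>F x in F. norm (f p x) \<le> C' * norm (g x)"
      if "\<forall>\<^sub>F x in F. norm (f p x) \<le> C * norm (g x)" "C \<le> C'" for p C C'
      using that(1) by eventually_elim (meson that(2) mult_right_mono norm_ge_zero order.trans)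
  qed
  then show ?thesis using assms(1) by (auto simp: eventually_ball_finite_distrib)
qed

lemma norm_le_card_mult:
  fixes v :: "real^'n" and e :: real
  assumes "\<And>j. \<bar>v $ j\<bar> \<le> e"
  shows "norm v \<le> CARD('n) * e"
proof -
  have "norm v \<le> (\<Sum>j\<in>UNIV. \<bar>v $ j\<bar>)" by (rule norm_le_l1_cart)
  also have "\<dots> \<le> (\<Sum>j\<in>(UNIV::'n set). e)" using assms by (rule sum_mono)
  finally show ?thesis by simp
qed

section \<open>Lagrange interpolation\<close>

definition lagr_poly :: "nat \<Rightarrow> (nat \<Rightarrow> real) \<Rightarrow> nat \<Rightarrow> real poly" where
  "lagr_poly k x j = (\<Prod>i\<in>{..<k} - {j}. [:- x i / (x j - x i), 1 / (x j - x i):])"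

lemma poly_lagr_poly: "poly (lagr_poly k x j) t = lagr k x j t"
  unfolding lagr_def lagr_poly_def poly_prod
  by (intro prod.cong) (auto simp: diff_divide_distrib)

lemma degree_lagr_poly:
  assumes "j < k"
  shows "degree (lagr_poly k x j) \<le> k - 1"
proof -
  have "degree (lagr_poly k x j) \<le> sum (degree \<circ> (\<lambda>i. [:- x i / (x j - x i), 1 / (x j - x i):])) ({..<k} - {j})"
    unfolding lagr_poly_def by (rule degree_prod_sum_le) simp
  also have "\<dots> \<le> (\<Sum>i\<in>{..<k} - {j}. 1)"
    by (intro sum_mono) auto
  also have "\<dots> = k - 1" using assms by simp
  finally show ?thesis .
qed

lemma poly_eq_0_if_roots:
  fixes p :: "real poly"
  assumes "degree p < k" and "inj_on x {..<k}" and "\<And>i. i < k \<Longrightarrow> poly p (x i) = 0"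
  shows "p = 0"
proof (rule ccontr)
  assume "p \<noteq> 0"
  have "k = card (x ` {..<k})" using assms(2) by (simp add: card_image)
  also have "\<dots> \<le> card {r. poly p r = 0}"
    using assms(3) poly_roots_finite[OF \<open>p \<noteq> 0\<close>] by (intro card_mono) auto
  also have "\<dots> \<le> degree p" using \<open>p \<noteq> 0\<close> by (rule card_poly_roots_bound)
  finally show False using assms(1) by simp
qed

lemma lagr_at_node:
  assumes "inj_on x {..<k}" "i < k" "j < k"
  shows "lagr k x j (x i) = (if i = j then 1 else 0)"
proof (cases "i = j")
  case True
  with assms have "\<forall>l\<in>{..<k} - {j}. (x i - x l) / (x j - x l) = 1"
    by (auto simp: inj_on_def)
  with True show ?thesis unfolding lagr_def by simp
next
  case False
  with assms show ?thesis unfolding lagr_def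
    by (intro prod_zero[THEN trans]) (auto intro!: bexI[of _ i])
qed

lemma lagr_interpolates_powers:
  assumes inj: "inj_on x {..<k}" and "m < k"
  shows "(\<Sum>j<k. lagr k x j t * (x j - s) ^ m) = (t - s) ^ m"
proof -
  define Q where "Q = (\<Sum>j<k. smult ((x j - s) ^ m) (lagr_poly k x j)) - [:- s, 1:] ^ m"
  have poly_Q: "poly Q r = (\<Sum>j<k. lagr k x j r * (x j - s) ^ m) - (r - s) ^ m" for r
    unfolding Q_def by (simp add: poly_sum poly_lagr_poly poly_power mult.commute)
  have "Q = 0"
  proof (rule poly_eq_0_if_roots[OF _ inj])
    have "degree (\<Sum>j<k. smult ((x j - s) ^ m) (lagr_poly k x j)) \<le> k - 1"
      by (intro degree_sum_le order.trans[OF degree_smult_le degree_lagr_poly]) auto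
    moreover have "degree ([:- s, 1:] ^ m) \<le> k - 1"
      using \<open>m < k\<close> by (simp add: degree_power_eq)
    ultimately show "degree Q < k"
      unfolding Q_def using \<open>m < k\<close> degree_diff_le by fastforce
    fix i assume "i < k"
    then have "(\<Sum>j<k. lagr k x j (x i) * (x j - s) ^ m) = (x i - s) ^ m"
      by (simp add: lagr_at_node[OF inj] if_distrib[of "\<lambda>l. l * _"] cong: if_cong)
    then show "poly Q (x i) = 0" by (simp add: poly_Q)
  qed
  then show ?thesis using poly_Q[of t] by simp
qed

lemma sum_lagr:
  assumes "inj_on x {..<k}" "0 < k"
  shows "(\<Sum>j<k. lagr k x j t) = 1"
  using lagr_interpolates_powers[OF assms(1), of 0 t 0] assms(2) by simp

lemma lagr_affine:
  assumes "h \<noteq> 0"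
  shows "lagr k (\<lambda>j. c + h * x j) j (c + h * t) = lagr k x j t"
  unfolding lagr_def
proof (intro prod.cong refl)
  fix i
  have "(c + h * t - (c + h * x i)) / (c + h * x j - (c + h * x i)) = (h * (t - x i)) / (h * (x j - x i))"
    by (simp add: algebra_simps)
  with assms show "(c + h * t - (c + h * x i)) / (c + h * x j - (c + h * x i)) = (t - x i) / (x j - x i)"
    by simp
qed

lemma continuous_on_lagr: "continuous_on S (lagr k x j)"
  unfolding poly_lagr_poly[symmetric] by (intro continuous_intros)

lemma bounded_lagr:
  assumes "compact S"
  shows "\<exists>B. \<forall>t\<in>S. \<bar>lagr k x j t\<bar> \<le> B"
proof -
  have "bounded (lagr k x j ` S)"
    by (intro compact_imp_bounded compact_continuous_image continuous_on_lagr assms)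
  then show ?thesis by (auto simp: bounded_iff)
qed

lemma inj_on_affine_decreasing:
  fixes x :: "nat \<Rightarrow> real"
  assumes "\<forall>i. Suc i < k \<longrightarrow> x (Suc i) < x i" and "h \<noteq> 0"
  shows "inj_on (\<lambda>i. c + h * x i) {..<k}"
proof (rule linorder_inj_onI')
  fix i j assume "i \<in> {..<k}" "j \<in> {..<k}" "i < j"
  have "- x i < - x j"
  proof (rule lift_Suc_mono_less_ivl[of "{n. Suc n < k}" "\<lambda>n. - x n"])
    show "\<And>n. n \<in> {n. Suc n < k} \<Longrightarrow> - x n < - x (Suc n)" using assms(1) by simp
    show "{i..<j} \<subseteq> {n. Suc n < k}" using \<open>j \<in> {..<k}\<close> by auto
  qed fact
  with assms(2) show "c + h * x i \<noteq> c + h * x j" by simp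
qed

lemma taylor_remainder_bound:
  fixes f :: "real \<Rightarrow> real" and diff :: "nat \<Rightarrow> real \<Rightarrow> real"
  assumes "0 < k" and "convex U" and "diff 0 = f"
    and deriv: "\<And>m t. m < k \<Longrightarrow> t \<in> U \<Longrightarrow> DERIV (diff m) t :> diff (Suc m) t"
    and bound: "\<And>t. t \<in> U \<Longrightarrow> \<bar>diff k t\<bar> \<le> M"
    and "t \<in> U" and "x \<in> U"
  shows "\<bar>f x - (\<Sum>m<k. diff m t / fact m * (x - t) ^ m)\<bar> \<le> M / fact k * \<bar>x - t\<bar> ^ k"
proof (cases "x = t")
  case True
  then have "(\<Sum>m<k. diff m t / fact m * (x - t) ^ m) = f t"
    using \<open>0 < k\<close> \<open>diff 0 = f\<close> by (simp add: zero_power sum.lessThan_Suc_shift del: sum.lessThan_Suc)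
  with True \<open>0 < k\<close> show ?thesis by (simp add: zero_power)
next
  case False
  have segment: "{min x t..max x t} \<subseteq> U"
    using closed_segment_subset[OF \<open>x \<in> U\<close> \<open>t \<in> U\<close> \<open>convex U\<close>]
    by (simp add: closed_segment_eq_real_ivl min_def max_def split: if_splits)
  obtain \<xi> where \<xi>: "if x < t then x < \<xi> \<and> \<xi> < t else t < \<xi> \<and> \<xi> < x"
    and taylor: "f x = (\<Sum>m<k. diff m t / fact m * (x - t) ^ m) + diff k \<xi> / fact k * (x - t) ^ k"
    using Taylor[where a="min x t" and b="max x t" and diff=diff and f=f and n=k and c=t and x=x,
        OF \<open>0 < k\<close> \<open>diff 0 = f\<close>] segment deriv False
    by (force simp: subset_iff)
  have "\<xi> \<in> U" using \<xi> segment by (auto split: if_splits)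
  then have "\<bar>diff k \<xi> / fact k * (x - t) ^ k\<bar> \<le> M / fact k * \<bar>x - t\<bar> ^ k"
    using bound by (simp add: abs_mult power_abs divide_right_mono mult_right_mono)
  with taylor show ?thesis by simp
qed

lemma lagr_interpolation_error:
  fixes f :: "real \<Rightarrow> real" and diff :: "nat \<Rightarrow> real \<Rightarrow> real"
  assumes inj: "inj_on x {..<k}" and "0 < k" and "convex U" and "diff 0 = f"
    and deriv: "\<And>m t. m < k \<Longrightarrow> t \<in> U \<Longrightarrow> DERIV (diff m) t :> diff (Suc m) t"
    and bound: "\<And>t. t \<in> U \<Longrightarrow> \<bar>diff k t\<bar> \<le> M"
    and "t \<in> U" and nodes: "\<And>j. j < k \<Longrightarrow> x j \<in> U \<and> \<bar>x j - t\<bar> \<le> \<rho> \<and> \<bar>lagr k x j t\<bar> \<le> \<Lambda>"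
  shows "\<bar>(\<Sum>j<k. lagr k x j t * f (x j)) - f t\<bar> \<le> k * \<Lambda> * M / fact k * \<rho> ^ k"
proof -
  \<comment> \<open>Interpolation reproduces the Taylor polynomial at \<open>t\<close> (degree \<open>< k\<close>), so only the remainders at the nodes are left.\<close>
  define R where "R j = f (x j) - (\<Sum>m<k. diff m t / fact m * (x j - t) ^ m)" for j
  have "(\<Sum>j<k. \<Sum>m<k. diff m t / fact m * (lagr k x j t * (x j - t) ^ m))
      = (\<Sum>m<k. diff m t / fact m * (\<Sum>j<k. lagr k x j t * (x j - t) ^ m))"
    by (subst sum.swap) (simp add: sum_distrib_left)
  also have "\<dots> = (\<Sum>m<k. diff m t / fact m * (t - t) ^ m)"
    by (simp add: lagr_interpolates_powers[OF inj])
  also have "\<dots> = f t"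
    using \<open>0 < k\<close> \<open>diff 0 = f\<close> by (simp add: zero_power sum.lessThan_Suc_shift del: sum.lessThan_Suc)
  finally have "(\<Sum>j<k. lagr k x j t * f (x j)) - f t = (\<Sum>j<k. lagr k x j t * R j)"
    by (simp add: R_def algebra_simps sum.distrib sum_distrib_left sum_subtractf)
  also have "\<bar>\<dots>\<bar> \<le> (\<Sum>j<k. \<Lambda> * (M / fact k * \<rho> ^ k))"
  proof (rule order.trans[OF sum_abs sum_mono])
    fix j assume "j \<in> {..<k}"
    with nodes have j: "x j \<in> U" "\<bar>x j - t\<bar> \<le> \<rho>" "\<bar>lagr k x j t\<bar> \<le> \<Lambda>" by auto
    have "0 \<le> M" using bound \<open>t \<in> U\<close> by force
    have "\<bar>R j\<bar> \<le> M / fact k * \<bar>x j - t\<bar> ^ k"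
      unfolding R_def by (rule taylor_remainder_bound) (use assms j in auto)
    also have "\<dots> \<le> M / fact k * \<rho> ^ k"
      using j \<open>0 \<le> M\<close> by (intro mult_left_mono power_mono) auto
    finally show "\<bar>lagr k x j t * R j\<bar> \<le> \<Lambda> * (M / fact k * \<rho> ^ k)"
      unfolding abs_mult using j by (intro mult_mono) auto
  qed
  finally show ?thesis by simp
qed

section \<open>Smooth vector fields\<close>

(* Move from x to x + v one coordinate at a time, with the mean value theorem for each move. *)
lemma partials_increment_bound:
  fixes G :: "real^'n \<Rightarrow> real" and P :: "'n \<Rightarrow> real^'n \<Rightarrow> real"
  assumes partial: "\<And>i w. ((\<lambda>r. G (w + r *\<^sub>R axis i 1)) has_real_derivative P i w) (at 0)"
    and close: "\<And>i w. norm (w - x) \<le> norm v \<Longrightarrow> \<bar>P i w - P i x\<bar> \<le> e"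
  shows "\<bar>G (x + v) - G x - (\<Sum>i\<in>UNIV. v $ i * P i x)\<bar> \<le> e * (\<Sum>i\<in>UNIV. \<bar>v $ i\<bar>)"
proof -
  define vA where "vA A = (\<chi> i. if i \<in> A then v $ i else 0)" for A
  have "\<bar>G (x + vA A) - G x - (\<Sum>i\<in>A. v $ i * P i x)\<bar> \<le> e * (\<Sum>i\<in>A. \<bar>v $ i\<bar>)" for A
    using finite[of A]
  proof (induction A rule: finite_induct)
    case empty
    have "vA {} = 0" by (simp add: vA_def vec_eq_iff)
    then show ?case by simp
  next
    case (insert a A)
    define g where "g r = G (x + vA A + r *\<^sub>R axis a 1) - P a x * r" for r
    have "norm (g (v $ a) - g 0) \<le> e * norm (v $ a - 0)"
    proof (rule field_differentiable_bound[OF convex_cball])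
      fix r :: real assume "r \<in> cball 0 \<bar>v $ a\<bar>"
      have "((\<lambda>r'. G ((x + vA A + r *\<^sub>R axis a 1) + r' *\<^sub>R axis a 1)) has_real_derivative
          P a (x + vA A + r *\<^sub>R axis a 1)) (at 0)" by (rule partial)
      then have "((\<lambda>r. G (x + vA A + r *\<^sub>R axis a 1)) has_real_derivative P a (x + vA A + r *\<^sub>R axis a 1)) (at r)"
        using DERIV_shift[of _ _ 0 r] by (simp add: algebra_simps scaleR_add_left)
      from DERIV_diff[OF this DERIV_cmult_Id]
      show "(g has_field_derivative P a (x + vA A + r *\<^sub>R axis a 1) - P a x) (at r within cball 0 \<bar>v $ a\<bar>)"
        unfolding g_def by (rule has_field_derivative_at_within)
      have "norm (vA A + r *\<^sub>R axis a 1) \<le> norm v"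
        using \<open>a \<notin> A\<close> \<open>r \<in> cball 0 \<bar>v $ a\<bar>\<close>
        by (intro norm_le_componentwise_cart) (auto simp: vA_def axis_def)
      then show "norm (P a (x + vA A + r *\<^sub>R axis a 1) - P a x) \<le> e"
        using close by (simp add: add.assoc)
    qed auto
    moreover have "x + vA (insert a A) = (x + vA A) + v $ a *\<^sub>R axis a 1"
      using \<open>a \<notin> A\<close> by (simp add: vA_def vec_eq_iff axis_def)
    ultimately have "\<bar>G (x + vA (insert a A)) - G (x + vA A) - v $ a * P a x\<bar> \<le> e * \<bar>v $ a\<bar>"
      unfolding g_def by (simp add: add.assoc algebra_simps)
    with insert show ?case by (simp add: distrib_left)
  qed
  moreover have "vA UNIV = v" by (simp add: vA_def vec_eq_iff)
  ultimately show ?thesis by metis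
qed

lemma has_derivative_of_continuous_partials:
  fixes G :: "real^'n \<Rightarrow> real" and P :: "'n \<Rightarrow> real^'n \<Rightarrow> real"
  assumes partial: "\<And>i w. ((\<lambda>r. G (w + r *\<^sub>R axis i 1)) has_real_derivative P i w) (at 0)"
    and cont: "\<And>i. continuous_on UNIV (P i)"
  shows "(G has_derivative (\<lambda>v. \<Sum>i\<in>UNIV. v $ i * P i x)) (at x)"
  unfolding has_derivative_at'
proof (intro conjI allI impI)
  have "linear (\<lambda>v. \<Sum>i\<in>UNIV. v $ i * P i x)"
    by (rule linearI) (simp_all add: algebra_simps sum.distrib sum_distrib_left)
  then show "bounded_linear (\<lambda>v. \<Sum>i\<in>UNIV. v $ i * P i x)"
    by (simp add: linear_conv_bounded_linear)
  fix \<epsilon> :: real assume "0 < \<epsilon>"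
  define e where "e = \<epsilon> / (real CARD('n) + 1)"
  have "0 < e" using \<open>0 < \<epsilon>\<close> by (simp add: e_def)
  have "\<forall>\<^sub>F w in at x. \<forall>i. dist (P i w) (P i x) < e"
    using cont \<open>0 < e\<close> by (intro eventually_all_finite) (auto simp: continuous_on_def tendsto_iff)
  then obtain d where "0 < d" and d: "\<And>w i. w \<noteq> x \<Longrightarrow> dist w x < d \<Longrightarrow> dist (P i w) (P i x) < e"
    unfolding eventually_at by blast
  show "\<exists>d>0. \<forall>x'. 0 < norm (x' - x) \<and> norm (x' - x) < d \<longrightarrow>
          norm (G x' - G x - (\<Sum>i\<in>UNIV. (x' - x) $ i * P i x)) / norm (x' - x) < \<epsilon>"
  proof (intro exI[of _ d] conjI allI impI \<open>0 < d\<close>)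
    fix x' assume x': "0 < norm (x' - x) \<and> norm (x' - x) < d"
    have "\<bar>G (x + (x' - x)) - G x - (\<Sum>i\<in>UNIV. (x' - x) $ i * P i x)\<bar> \<le> e * (\<Sum>i\<in>UNIV. \<bar>(x' - x) $ i\<bar>)"
    proof (rule partials_increment_bound[OF partial])
      fix i w assume "norm (w - x) \<le> norm (x' - x)"
      then show "\<bar>P i w - P i x\<bar> \<le> e"
        using d[of w i] x' \<open>0 < e\<close> by (cases "w = x") (auto simp: dist_norm)
    qed
    also have "\<dots> \<le> e * (\<Sum>i\<in>(UNIV::'n set). norm (x' - x))"
      using \<open>0 < e\<close> component_le_norm_cart[of "x' - x"] by (intro mult_left_mono sum_mono) auto
    also have "\<dots> < \<epsilon> * norm (x' - x)"
      using x' \<open>0 < \<epsilon>\<close> by (simp add: e_def field_simps)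
    finally show "norm (G x' - G x - (\<Sum>i\<in>UNIV. (x' - x) $ i * P i x)) / norm (x' - x) < \<epsilon>"
      using x' by (simp add: divide_less_eq)
  qed
qed

definition iter_partial :: "(real^'n \<Rightarrow> real^'m) \<Rightarrow> 'n list \<Rightarrow> real^'n \<Rightarrow> real^'m" where
  "iter_partial f ds = fold partial_dir ds f"

lemma iter_partial_Nil [simp]: "iter_partial f [] = f"
  by (simp add: iter_partial_def)

lemma continuous_on_iter_partial: "smooth_vf f \<Longrightarrow> continuous_on UNIV (iter_partial f ds)"
  by (simp add: smooth_vf_def iter_partial_def)

lemma has_real_derivative_iter_partial_axis:
  assumes "smooth_vf f"
  shows "((\<lambda>r. iter_partial f ds (v + r *\<^sub>R axis i 1) $ j) has_real_derivative iter_partial f (ds @ [i]) v $ j) (at 0)"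
proof -
  have "(\<lambda>r. iter_partial f ds (v + r *\<^sub>R axis i 1)) differentiable (at 0)"
    using assms by (simp add: smooth_vf_def iter_partial_def)
  then have "((\<lambda>r. iter_partial f ds (v + r *\<^sub>R axis i 1)) has_vector_derivative iter_partial f (ds @ [i]) v) (at 0)"
    by (simp add: iter_partial_def partial_dir_def vector_derivative_works[symmetric])
  from bounded_linear.has_vector_derivative[OF bounded_linear_vec_nth this, of j]
  show ?thesis by (simp add: has_real_derivative_iff_has_vector_derivative)
qed

lemma has_derivative_iter_partial:
  assumes "smooth_vf f"
  shows "((\<lambda>v. iter_partial f ds v $ j) has_derivative (\<lambda>w. \<Sum>i\<in>UNIV. w $ i * iter_partial f (ds @ [i]) x $ j)) (at x)"
  using assms
  by (intro has_derivative_of_continuous_partials has_real_derivative_iter_partial_axis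
      continuous_on_component continuous_on_iter_partial)

lemma has_real_derivative_iter_partial_comp:
  assumes "smooth_vf f" and "(u has_vector_derivative u') (at t)"
  shows "((\<lambda>t. iter_partial f ds (u t) $ j) has_real_derivative
           (\<Sum>i\<in>UNIV. u' $ i * iter_partial f (ds @ [i]) (u t) $ j)) (at t)"
proof -
  have u: "(u has_derivative (\<lambda>r. r *\<^sub>R u')) (at t)"
    using assms(2) by (simp add: has_vector_derivative_def)
  from diff_chain_at[OF u has_derivative_iter_partial[OF assms(1)]]
  have "((\<lambda>t. iter_partial f ds (u t) $ j) has_derivative
      (\<lambda>r. \<Sum>i\<in>UNIV. r * (u' $ i * iter_partial f (ds @ [i]) (u t) $ j))) (at t)"
    by (simp add: o_def mult.assoc)
  then show ?thesis
    unfolding has_field_derivative_def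
    by (rule has_derivative_eq_rhs) (simp add: fun_eq_iff sum_distrib_left mult.commute)
qed

lemma bounded_iter_partial:
  assumes "smooth_vf f" and "compact K"
  shows "\<exists>B. \<forall>v\<in>K. \<bar>iter_partial f ds v $ j\<bar> \<le> B"
proof -
  have "compact ((\<lambda>v. iter_partial f ds v $ j) ` K)"
    using assms by (intro compact_continuous_image continuous_on_component
        continuous_on_subset[OF continuous_on_iter_partial]) auto
  then show ?thesis by (auto dest!: compact_imp_bounded simp: bounded_iff)
qed

lemma smooth_vf_component_diff_le:
  fixes f :: "real^'n \<Rightarrow> real^'m" and B :: real
  assumes "smooth_vf f" and "convex K" and "u \<in> K" and "w \<in> K"
    and bound: "\<And>i v. v \<in> K \<Longrightarrow> \<bar>iter_partial f [i] v $ j\<bar> \<le> B"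
  shows "\<bar>(f u - f w) $ j\<bar> \<le> CARD('n) * B * norm (u - w)"
proof -
  define g where "g r = f (w + r *\<^sub>R (u - w)) $ j" for r
  have "norm (g 1 - g 0) \<le> CARD('n) * B * norm (u - w) * norm (1 - 0 :: real)"
  proof (rule field_differentiable_bound[OF convex_real_interval(5)])
    fix r :: real assume "r \<in> {0..1}"
    then have "w + r *\<^sub>R (u - w) \<in> K"
      using assms(2-4) by (simp add: convex_alt algebra_simps scaleR_diff_left)
    have "((\<lambda>r. w + r *\<^sub>R (u - w)) has_vector_derivative u - w) (at r)"
      by (auto intro!: derivative_eq_intros)
    from has_real_derivative_iter_partial_comp[OF assms(1) this, of "[]" j]
    show "(g has_field_derivative (\<Sum>i\<in>UNIV. (u - w) $ i * iter_partial f [i] (w + r *\<^sub>R (u - w)) $ j))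
        (at r within {0..1})"
      unfolding g_def by (simp add: has_field_derivative_at_within)
    have "\<bar>\<Sum>i\<in>UNIV. (u - w) $ i * iter_partial f [i] (w + r *\<^sub>R (u - w)) $ j\<bar>
        \<le> (\<Sum>i\<in>(UNIV::'n set). norm (u - w) * B)"
      using bound \<open>w + r *\<^sub>R (u - w) \<in> K\<close>
      by (intro order.trans[OF sum_abs sum_mono])
         (auto simp: abs_mult intro!: mult_mono component_le_norm_cart[of "u - w", simplified])
    then show "norm (\<Sum>i\<in>UNIV. (u - w) $ i * iter_partial f [i] (w + r *\<^sub>R (u - w)) $ j)
        \<le> CARD('n) * B * norm (u - w)"
      by (simp add: algebra_simps)
  qed auto
  then show ?thesis by (simp add: g_def)
qed

lemma smooth_vf_lipschitz_on:
  fixes f :: "real^'n \<Rightarrow> real^'m"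
  assumes "smooth_vf f" and "compact K" and "convex K"
  shows "\<exists>L. L-lipschitz_on K f"
proof -
  obtain B where B: "\<forall>(i, j)\<in>UNIV. \<forall>v\<in>K. \<bar>iter_partial f [i] v $ j\<bar> \<le> B"
    using ex_common_bound_finite[of UNIV "\<lambda>(i, j) B. \<forall>v\<in>K. \<bar>iter_partial f [i] v $ j\<bar> \<le> B"]
      bounded_iter_partial[OF assms(1,2)] by fastforce
  define L where "L = CARD('m) * (CARD('n) * B)"
  have "\<bar>L\<bar>-lipschitz_on K f"
  proof (intro lipschitz_onI)
    fix u w assume "u \<in> K" "w \<in> K"
    have "\<bar>(f u - f w) $ j\<bar> \<le> CARD('n) * B * norm (u - w)" for j
      by (rule smooth_vf_component_diff_le[OF assms(1,3) \<open>u \<in> K\<close> \<open>w \<in> K\<close>]) (use B in auto)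
    then have "norm (f u - f w) \<le> CARD('m) * (CARD('n) * B * norm (u - w))"
      by (rule norm_le_card_mult)
    also have "\<dots> = L * norm (u - w)" by (simp add: L_def)
    also have "\<dots> \<le> \<bar>L\<bar> * norm (u - w)" by (intro mult_right_mono) auto
    finally show "dist (f u) (f w) \<le> \<bar>L\<bar> * dist u w" by (simp add: dist_norm)
  qed simp
  then show ?thesis ..
qed

section \<open>Tensor-product interpolation\<close>

lemma multi_index_eq_PiE: "{J :: 's::finite \<Rightarrow> nat. \<forall>s. J s < k} = PiE UNIV (\<lambda>_. {..<k})"
  by (auto simp: PiE_def Pi_def extensional_def)

lemma sum_multi_index_fun_upd:
  fixes f :: "('s::finite \<Rightarrow> nat) \<Rightarrow> 'a::comm_monoid_add"
  assumes "0 < k"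
  shows "(\<Sum>J\<in>{J. \<forall>s. J s < k}. f J) = (\<Sum>J\<in>{J. (\<forall>s. J s < k) \<and> J a = 0}. \<Sum>j<k. f (J(a := j)))"
proof -
  have "(\<Sum>J\<in>{J. (\<forall>s. J s < k) \<and> J a = 0}. \<Sum>j<k. f (J(a := j)))
      = (\<Sum>(J, j)\<in>{J. (\<forall>s. J s < k) \<and> J a = 0} \<times> {..<k}. f (J(a := j)))"
    by (simp add: sum.cartesian_product)
  also have "\<dots> = (\<Sum>J\<in>{J. \<forall>s. J s < k}. f J)"
    by (rule sum.reindex_bij_witness[where i="\<lambda>J. (J(a := 0), J a)" and j="\<lambda>(J, j). J(a := j)"])
       (use assms in auto)
  finally show ?thesis by simp
qed

definition node_point :: "'s set \<Rightarrow> ('s \<Rightarrow> nat \<Rightarrow> real) \<Rightarrow> real \<Rightarrow> ('s \<Rightarrow> nat) \<Rightarrow> 's \<Rightarrow> real" where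
  "node_point A \<nu> t J = (\<lambda>s. if s \<in> A then \<nu> s (J s) else t)"

(* Interpolation in the coordinates in A only, the others frozen at t: A = {} gives F at t,
   A = UNIV the tensor-product interpolant, and each added coordinate costs one
   one-dimensional interpolation error. *)
definition tensor_interp ::
    "nat \<Rightarrow> ('s::finite \<Rightarrow> nat \<Rightarrow> real) \<Rightarrow> ('s \<Rightarrow> nat \<Rightarrow> real) \<Rightarrow> (('s \<Rightarrow> real) \<Rightarrow> real) \<Rightarrow> real \<Rightarrow> 's set \<Rightarrow> real" where
  "tensor_interp k w \<nu> F t A = (\<Sum>J\<in>{J. \<forall>s. J s < k}. (\<Prod>s\<in>UNIV. w s (J s)) * F (node_point A \<nu> t J))"

lemma tensor_interp_empty:
  assumes "\<And>s. (\<Sum>j<k. w s j) = 1"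
  shows "tensor_interp k w \<nu> F t {} = F (\<lambda>_. t)"
proof -
  have "(\<Sum>J\<in>{J. \<forall>s. J s < k}. \<Prod>s\<in>UNIV. w s (J s)) = 1"
    by (simp add: multi_index_eq_PiE prod_sum_PiE[symmetric] assms)
  then show ?thesis
    by (simp add: tensor_interp_def node_point_def sum_distrib_right[symmetric])
qed

lemma tensor_interp_insert:
  assumes "0 < k" and "(\<Sum>j<k. w a j) = 1" and "a \<notin> A"
  shows "tensor_interp k w \<nu> F t (insert a A) - tensor_interp k w \<nu> F t A
    = (\<Sum>J\<in>{J. (\<forall>s. J s < k) \<and> J a = 0}. (\<Prod>s\<in>UNIV - {a}. w s (J s)) *
        ((\<Sum>j<k. w a j * F ((node_point A \<nu> t J)(a := \<nu> a j))) - F ((node_point A \<nu> t J)(a := t))))"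
proof -
  let ?w' = "\<lambda>J. \<Prod>s\<in>UNIV - {a}. w s (J s)" and ?p = "node_point A \<nu> t"
  have weight: "(\<Prod>s\<in>UNIV. w s ((J(a := j)) s)) = w a j * ?w' J" for J j
  proof -
    have "(\<Prod>s\<in>UNIV - {a}. w s ((J(a := j)) s)) = ?w' J" by (intro prod.cong) auto
    then show ?thesis by (simp add: prod.remove[of UNIV a])
  qed
  have points: "node_point (insert a A) \<nu> t (J(a := j)) = (?p J)(a := \<nu> a j)"
    "?p (J(a := j)) = ?p J" "(?p J)(a := t) = ?p J" for J j
    using \<open>a \<notin> A\<close> by (auto simp: node_point_def)
  have "tensor_interp k w \<nu> F t (insert a A) - tensor_interp k w \<nu> F t A
      = (\<Sum>J\<in>{J. \<forall>s. J s < k}. (\<Prod>s\<in>UNIV. w s (J s)) *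
          (F (node_point (insert a A) \<nu> t J) - F (?p J)))"
    by (simp add: tensor_interp_def sum_subtractf algebra_simps)
  also have "\<dots> = (\<Sum>J\<in>{J. (\<forall>s. J s < k) \<and> J a = 0}. \<Sum>j<k. (\<Prod>s\<in>UNIV. w s ((J(a := j)) s)) *
      (F (node_point (insert a A) \<nu> t (J(a := j))) - F (?p (J(a := j)))))"
    by (rule sum_multi_index_fun_upd[OF \<open>0 < k\<close>])
  also have "\<dots> = (\<Sum>J\<in>{J. (\<forall>s. J s < k) \<and> J a = 0}. \<Sum>j<k. ?w' J *
      (w a j * F ((?p J)(a := \<nu> a j)) - w a j * F (?p J)))"
    unfolding weight points by (simp add: algebra_simps)
  also have "\<dots> = (\<Sum>J\<in>{J. (\<forall>s. J s < k) \<and> J a = 0}. ?w' J *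
      ((\<Sum>j<k. w a j * F ((?p J)(a := \<nu> a j))) - F ((?p J)(a := t))))"
    by (simp add: sum_subtractf sum_distrib_left[symmetric] sum_distrib_right[symmetric] assms(2) points(3))
  finally show ?thesis .
qed

context
  fixes k :: nat and w \<nu> :: "'s::finite \<Rightarrow> nat \<Rightarrow> real" and F :: "('s \<Rightarrow> real) \<Rightarrow> real"
    and t \<Lambda> \<epsilon> :: real and V :: "real set"
  assumes k_pos: "0 < k" and sum_w: "\<And>s. (\<Sum>j<k. w s j) = 1"
    and w_bound: "\<And>s j. j < k \<Longrightarrow> \<bar>w s j\<bar> \<le> \<Lambda>" and "1 \<le> \<Lambda>"
    and "t \<in> V" and nodes: "\<And>s j. j < k \<Longrightarrow> \<nu> s j \<in> V"
    and err: "\<And>\<sigma> s. (\<forall>s'. \<sigma> s' \<in> V) \<Longrightarrow>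
               \<bar>(\<Sum>j<k. w s j * F (\<sigma>(s := \<nu> s j))) - F (\<sigma>(s := t))\<bar> \<le> \<epsilon>"
begin

lemma tensor_interp_insert_bound:
  assumes "a \<notin> A"
  shows "\<bar>tensor_interp k w \<nu> F t (insert a A) - tensor_interp k w \<nu> F t A\<bar> \<le> (k * \<Lambda>) ^ CARD('s) * \<epsilon>"
proof -
  let ?JS = "{J :: 's \<Rightarrow> nat. \<forall>s. J s < k}" and ?JS_a = "{J. (\<forall>s. J s < k) \<and> J a = 0}"
  have "0 \<le> \<epsilon>" using err[of "\<lambda>_. t"] \<open>t \<in> V\<close> by (meson abs_ge_zero order.trans)
  have "\<bar>tensor_interp k w \<nu> F t (insert a A) - tensor_interp k w \<nu> F t A\<bar> \<le> (\<Sum>J\<in>?JS_a. \<Lambda> ^ CARD('s) * \<epsilon>)"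
    unfolding tensor_interp_insert[OF k_pos sum_w assms]
  proof (rule order.trans[OF sum_abs sum_mono])
    fix J assume J: "J \<in> ?JS_a"
    have "\<bar>\<Prod>s\<in>UNIV - {a}. w s (J s)\<bar> \<le> \<Lambda> ^ CARD('s)"
      unfolding abs_prod using J w_bound \<open>1 \<le> \<Lambda>\<close> by (intro prod_le_power) (auto simp: card_Diff_subset)
    moreover have "\<forall>s'. node_point A \<nu> t J s' \<in> V"
      using J \<open>t \<in> V\<close> nodes by (auto simp: node_point_def)
    ultimately show "\<bar>(\<Prod>s\<in>UNIV - {a}. w s (J s)) * ((\<Sum>j<k. w a j * F ((node_point A \<nu> t J)(a := \<nu> a j)))
        - F ((node_point A \<nu> t J)(a := t)))\<bar> \<le> \<Lambda> ^ CARD('s) * \<epsilon>"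
      unfolding abs_mult using \<open>1 \<le> \<Lambda>\<close> by (intro mult_mono err) auto
  qed
  also have "\<dots> = card ?JS_a * (\<Lambda> ^ CARD('s) * \<epsilon>)" by simp
  also have "\<dots> \<le> card ?JS * (\<Lambda> ^ CARD('s) * \<epsilon>)"
    using card_mono[of ?JS ?JS_a] \<open>0 \<le> \<epsilon>\<close> \<open>1 \<le> \<Lambda>\<close>
    by (intro mult_right_mono) (auto simp: multi_index_eq_PiE finite_PiE)
  finally show ?thesis by (simp add: multi_index_eq_PiE card_PiE power_mult_distrib mult.assoc)
qed

lemma tensor_interpolation_error:
  "\<bar>(\<Sum>J\<in>{J. \<forall>s. J s < k}. (\<Prod>s\<in>UNIV. w s (J s)) * F (\<lambda>s. \<nu> s (J s))) - F (\<lambda>_. t)\<bar>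
     \<le> CARD('s) * (k * \<Lambda>) ^ CARD('s) * \<epsilon>"
proof -
  have "\<bar>tensor_interp k w \<nu> F t A - F (\<lambda>_. t)\<bar> \<le> card A * ((k * \<Lambda>) ^ CARD('s) * \<epsilon>)" for A
    using finite[of A]
  proof (induction A rule: finite_induct)
    case empty
    then show ?case by (simp add: tensor_interp_empty[OF sum_w])
  next
    case (insert a A)
    then show ?case using tensor_interp_insert_bound[of a A] by (simp add: algebra_simps)
  qed
  from this[of UNIV] show ?thesis
    by (simp add: tensor_interp_def node_point_def mult.assoc)
qed

end

section \<open>The substep as a quadrature rule\<close>

lemma lts_substep_eq_quadrature:
  assumes "tnext \<noteq> tpast 0"
  shows "lts_substep k blk D tnext tpast tset Y =
    (\<Sum>i<k. integral {tpast 0..tnext} (lagr k tpast i) *\<^sub>R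
       (\<Sum>J\<in>{J. \<forall>s. J s < k}. (\<Prod>s\<in>UNIV. lagr k (tset s) (J s) (tpast i)) *\<^sub>R
          D (\<chi> i'. Y (blk i') (J (blk i')) $ i')))"
proof -
  let ?I = "\<lambda>i. integral {tpast 0..tnext} (lagr k tpast i)"
    and ?w = "\<lambda>i J. \<Prod>s\<in>UNIV. lagr k (tset s) (J s) (tpast i)"
  have "lts_beta k tnext tpast tset J = (\<Sum>i<k. ?I i * ?w i J)" for J
    unfolding lts_beta_def ab_alpha_def sum_distrib_left
    by (intro sum.cong refl) (use assms in simp)
  then have "lts_substep k blk D tnext tpast tset Y
      = (\<Sum>J\<in>{J. \<forall>s. J s < k}. \<Sum>i<k. ?I i *\<^sub>R (?w i J *\<^sub>R D (\<chi> i'. Y (blk i') (J (blk i')) $ i')))"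
    by (simp add: lts_substep_def scaleR_sum_left)
  also have "\<dots> = (\<Sum>i<k. ?I i *\<^sub>R (\<Sum>J\<in>{J. \<forall>s. J s < k}. ?w i J *\<^sub>R D (\<chi> i'. Y (blk i') (J (blk i')) $ i')))"
    by (subst sum.swap) (simp add: scaleR_sum_right)
  finally show ?thesis .
qed

lemma lagr_quadrature_error:
  fixes y g :: "real \<Rightarrow> 'a::banach"
  assumes "t0 \<le> t1"
    and deriv: "\<And>t. t \<in> {t0..t1} \<Longrightarrow> (y has_vector_derivative g t) (at t)"
    and interp: "\<And>t. t \<in> {t0..t1} \<Longrightarrow> norm ((\<Sum>i<k. lagr k x i t *\<^sub>R v i) - g t) \<le> E"
  shows "norm ((\<Sum>i<k. integral {t0..t1} (lagr k x i) *\<^sub>R v i) - (y t1 - y t0)) \<le> E * (t1 - t0)"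
proof -
  have interpolant: "((\<lambda>t. \<Sum>i<k. lagr k x i t *\<^sub>R v i) has_integral
      (\<Sum>i<k. integral {t0..t1} (lagr k x i) *\<^sub>R v i)) {t0..t1}"
    by (intro has_integral_sum has_integral_scaleR_left integrable_integral
        integrable_continuous_interval continuous_on_lagr) auto
  have derivative: "(g has_integral (y t1 - y t0)) {t0..t1}"
    using deriv by (intro fundamental_theorem_of_calculus[OF \<open>t0 \<le> t1\<close>]) (auto intro: has_vector_derivative_at_within)
  have "0 \<le> E" using interp[of t0] \<open>t0 \<le> t1\<close> by (meson atLeastAtMost_iff norm_ge_zero order.refl order.trans)
  from has_integral_bound_real[OF this finite.emptyI has_integral_diff[OF interpolant derivative]]
  show ?thesis using interp \<open>t0 \<le> t1\<close> by simp
qed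

lemma abs_integral_lagr_le:
  assumes "t0 \<le> t1" and "\<And>t. t \<in> {t0..t1} \<Longrightarrow> \<bar>lagr k x i t\<bar> \<le> B"
  shows "\<bar>integral {t0..t1} (lagr k x i)\<bar> \<le> B * (t1 - t0)"
  using integral_bound[of t0 t1 "lagr k x i" B] assms
  by (auto intro: integrable_continuous_interval continuous_on_lagr)

section \<open>Derivatives along an exact solution\<close>

locale local_solution =
  fixes D :: "real^'n \<Rightarrow> real^'n" and y :: "real \<Rightarrow> real^'n" and blk :: "'n \<Rightarrow> 's::finite"
    and c \<delta> :: real
  assumes smooth: "smooth_vf D"
    and solution: "\<And>t. t \<in> ball c \<delta> \<Longrightarrow> (y has_vector_derivative D (y t)) (at t)"
    and near: "\<And>t i. t \<in> ball c \<delta> \<Longrightarrow> \<bar>y t $ i - y c $ i\<bar> \<le> 1"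
    and radius_pos: "0 < \<delta>"
begin

(* The argument of D in the scheme when block s is taken exactly at time sigma s. *)
definition ymix :: "('s \<Rightarrow> real) \<Rightarrow> real^'n" where
  "ymix \<sigma> = (\<chi> i. y (\<sigma> (blk i)) $ i)"

lemma ymix_const [simp]: "ymix (\<lambda>_. t) = y t"
  by (simp add: ymix_def vec_eq_iff)

definition cube :: "real \<Rightarrow> (real^'n) set" where
  "cube r = cbox (y c - (\<chi> i. r)) (y c + (\<chi> i. r))"

lemma mem_cube: "v \<in> cube r \<longleftrightarrow> (\<forall>i. \<bar>v $ i - y c $ i\<bar> \<le> r)"
  unfolding cube_def mem_box_cart by (auto simp: abs_le_iff algebra_simps)

lemma ymix_in_cube: "(\<And>s. \<sigma> s \<in> ball c \<delta>) \<Longrightarrow> ymix \<sigma> \<in> cube 1"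
  by (simp add: mem_cube ymix_def near)

lemma bounded_iter_partial_ymix:
  "\<exists>B. \<forall>\<sigma>. (\<forall>s. \<sigma> s \<in> ball c \<delta>) \<longrightarrow> \<bar>iter_partial D ds (ymix \<sigma>) $ j\<bar> \<le> B"
  using bounded_iter_partial[OF smooth, of "cube 1" ds j] ymix_in_cube by (auto simp: cube_def)

definition lip_const :: real where
  "lip_const = (SOME L. L-lipschitz_on (cube 2) D)"

lemma lipschitz_on_cube: "lip_const-lipschitz_on (cube 2) D"
  unfolding lip_const_def
  by (rule someI_ex) (auto simp: cube_def intro: smooth_vf_lipschitz_on[OF smooth])

lemma norm_D_diff_le:
  fixes e :: real
  assumes "v \<in> cube 1" and "\<And>l. \<bar>w $ l - v $ l\<bar> \<le> e" and "e \<le> 1"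
  shows "norm (D w - D v) \<le> lip_const * (CARD('n) * e)"
proof -
  have "\<bar>w $ l - y c $ l\<bar> \<le> 2 \<and> \<bar>v $ l - y c $ l\<bar> \<le> 2" for l
  proof -
    have "\<bar>w $ l - y c $ l\<bar> \<le> \<bar>w $ l - v $ l\<bar> + \<bar>v $ l - y c $ l\<bar>"
      using abs_triangle_ineq[of "w $ l - v $ l" "v $ l - y c $ l"] by simp
    moreover have "\<bar>v $ l - y c $ l\<bar> \<le> 1" using \<open>v \<in> cube 1\<close> by (simp add: mem_cube)
    ultimately show ?thesis using assms(2)[of l] \<open>e \<le> 1\<close> by linarith
  qed
  then have "w \<in> cube 2" "v \<in> cube 2" by (simp_all add: mem_cube)
  then have "norm (D w - D v) \<le> lip_const * norm (w - v)"
    using lipschitz_onD[OF lipschitz_on_cube] by (simp add: dist_norm)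
  also have "\<dots> \<le> lip_const * (CARD('n) * e)"
    using lipschitz_on_nonneg[OF lipschitz_on_cube] assms(2)
    by (intro mult_left_mono norm_le_card_mult) auto
  finally show ?thesis .
qed

(* Closed under d/dt by the chain rule and y' = D y (ymix_alg_deriv): this bounds all
   t-derivatives uniformly in sigma, as the Taylor estimate of interpolation requires. *)
inductive ymix_alg :: "'s \<Rightarrow> (('s \<Rightarrow> real) \<Rightarrow> real \<Rightarrow> real) \<Rightarrow> bool" for s where
  const: "ymix_alg s (\<lambda>\<sigma> t. r)"
| partial_ymix: "ymix_alg s (\<lambda>\<sigma> t. iter_partial D ds (ymix (\<sigma>(s := t))) $ j)"
| partial_y: "ymix_alg s (\<lambda>\<sigma> t. iter_partial D ds (y t) $ j)"
| add: "ymix_alg s f \<Longrightarrow> ymix_alg s g \<Longrightarrow> ymix_alg s (\<lambda>\<sigma> t. f \<sigma> t + g \<sigma> t)"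
| mult: "ymix_alg s f \<Longrightarrow> ymix_alg s g \<Longrightarrow> ymix_alg s (\<lambda>\<sigma> t. f \<sigma> t * g \<sigma> t)"

lemma ymix_alg_sum:
  "finite A \<Longrightarrow> (\<And>i. i \<in> A \<Longrightarrow> ymix_alg s (f i)) \<Longrightarrow> ymix_alg s (\<lambda>\<sigma> t. \<Sum>i\<in>A. f i \<sigma> t)"
  by (induction A rule: finite_induct) (auto intro: ymix_alg.intros ymix_alg.const[of s 0, simplified])

lemma ymix_alg_bounded:
  assumes "ymix_alg s \<Phi>"
  shows "\<exists>M. \<forall>\<sigma> t. (\<forall>s'. \<sigma> s' \<in> ball c \<delta>) \<longrightarrow> t \<in> ball c \<delta> \<longrightarrow> \<bar>\<Phi> \<sigma> t\<bar> \<le> M"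
  using assms
proof induction
  case (partial_ymix ds j)
  obtain B where "\<forall>\<sigma>. (\<forall>s. \<sigma> s \<in> ball c \<delta>) \<longrightarrow> \<bar>iter_partial D ds (ymix \<sigma>) $ j\<bar> \<le> B"
    using bounded_iter_partial_ymix by blast
  then show ?case by (intro exI[of _ B]) auto
next
  case (partial_y ds j)
  obtain B where "\<forall>\<sigma>. (\<forall>s. \<sigma> s \<in> ball c \<delta>) \<longrightarrow> \<bar>iter_partial D ds (ymix \<sigma>) $ j\<bar> \<le> B"
    using bounded_iter_partial_ymix by blast
  then show ?case by (intro exI[of _ B] allI impI) (metis ymix_const)
next
  case (add f g)
  then obtain M N where "\<forall>\<sigma> t. (\<forall>s'. \<sigma> s' \<in> ball c \<delta>) \<longrightarrow> t \<in> ball c \<delta> \<longrightarrow> \<bar>f \<sigma> t\<bar> \<le> M \<and> \<bar>g \<sigma> t\<bar> \<le> N"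
    by meson
  then show ?case
    by (intro exI[of _ "M + N"] allI impI) (meson abs_triangle_ineq add_mono order.trans)
next
  case (mult f g)
  then obtain M N where bounds: "\<forall>\<sigma> t. (\<forall>s'. \<sigma> s' \<in> ball c \<delta>) \<longrightarrow> t \<in> ball c \<delta> \<longrightarrow> \<bar>f \<sigma> t\<bar> \<le> M \<and> \<bar>g \<sigma> t\<bar> \<le> N"
    by meson
  show ?case
  proof (intro exI allI impI)
    fix \<sigma> :: "'s \<Rightarrow> real" and t :: real
    assume "\<forall>s'. \<sigma> s' \<in> ball c \<delta>" "t \<in> ball c \<delta>"
    with bounds have "\<bar>f \<sigma> t\<bar> \<le> M" "\<bar>g \<sigma> t\<bar> \<le> N" by auto
    then show "\<bar>f \<sigma> t * g \<sigma> t\<bar> \<le> M * N"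
      unfolding abs_mult by (meson abs_ge_zero mult_mono order.trans)
  qed
qed auto

lemma has_vector_derivative_ymix_upd:
  assumes "t \<in> ball c \<delta>"
  shows "((\<lambda>t. ymix (\<sigma>(s := t))) has_vector_derivative (\<chi> i. if blk i = s then D (y t) $ i else 0)) (at t)"
proof -
  let ?P = "\<lambda>v :: real^'n. \<chi> i. if blk i = s then v $ i else 0"
  have "linear ?P" by (rule linearI) (auto simp: vec_eq_iff)
  then have "bounded_linear ?P" by (simp add: linear_conv_bounded_linear)
  from bounded_linear.has_vector_derivative[OF this solution[OF assms]]
  have "((\<lambda>t. (\<chi> i. if blk i = s then 0 else y (\<sigma> (blk i)) $ i) + ?P (y t)) has_vector_derivative
      0 + ?P (D (y t))) (at t)"
    by (rule has_vector_derivative_add[OF has_vector_derivative_const])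
  moreover have "(\<lambda>t. ymix (\<sigma>(s := t))) = (\<lambda>t. (\<chi> i. if blk i = s then 0 else y (\<sigma> (blk i)) $ i) + ?P (y t))"
    by (auto simp: ymix_def vec_eq_iff)
  ultimately show ?thesis by simp
qed

lemma ymix_alg_deriv:
  assumes "ymix_alg s \<Phi>"
  shows "\<exists>\<Phi>'. ymix_alg s \<Phi>' \<and> (\<forall>\<sigma> t. t \<in> ball c \<delta> \<longrightarrow> DERIV (\<Phi> \<sigma>) t :> \<Phi>' \<sigma> t)"
  using assms
proof induction
  case (const r)
  show ?case by (intro exI[of _ "\<lambda>\<sigma> t. 0"]) (simp add: ymix_alg.const[of s 0, simplified])
next
  case (partial_ymix ds j)
  let ?\<Phi>' = "\<lambda>\<sigma> t. \<Sum>i | blk i = s. D (y t) $ i * iter_partial D (ds @ [i]) (ymix (\<sigma>(s := t))) $ j"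
  have "ymix_alg s ?\<Phi>'"
    by (intro ymix_alg_sum) (auto intro: ymix_alg.intros ymix_alg.partial_y[of _ "[]", simplified])
  moreover have "DERIV (\<lambda>t. iter_partial D ds (ymix (\<sigma>(s := t))) $ j) t :> ?\<Phi>' \<sigma> t"
    if "t \<in> ball c \<delta>" for \<sigma> t
    using has_real_derivative_iter_partial_comp[OF smooth has_vector_derivative_ymix_upd[OF that]]
    by (simp add: if_distrib[of "\<lambda>u. u * _"] sum.If_cases Collect_conj_eq[symmetric] cong: if_cong)
  ultimately show ?case by blast
next
  case (partial_y ds j)
  let ?\<Phi>' = "\<lambda>\<sigma> t. \<Sum>i\<in>UNIV. D (y t) $ i * iter_partial D (ds @ [i]) (y t) $ j"
  have "ymix_alg s ?\<Phi>'"
    by (intro ymix_alg_sum) (auto intro: ymix_alg.intros ymix_alg.partial_y[of s "[]", simplified])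
  moreover have "DERIV (\<lambda>t. iter_partial D ds (y t) $ j) t :> ?\<Phi>' \<sigma> t" if "t \<in> ball c \<delta>" for \<sigma> t
    by (rule has_real_derivative_iter_partial_comp[OF smooth solution[OF that]])
  ultimately show ?case by blast
next
  case (add f g)
  then obtain f' g' where "ymix_alg s f'" "ymix_alg s g'"
    and "\<forall>\<sigma> t. t \<in> ball c \<delta> \<longrightarrow> DERIV (f \<sigma>) t :> f' \<sigma> t \<and> DERIV (g \<sigma>) t :> g' \<sigma> t" by meson
  then show ?case by (intro exI[of _ "\<lambda>\<sigma> t. f' \<sigma> t + g' \<sigma> t"]) (auto intro: ymix_alg.add DERIV_add)
next
  case (mult f g)
  then obtain f' g' where "ymix_alg s f'" "ymix_alg s g'"
    and "\<forall>\<sigma> t. t \<in> ball c \<delta> \<longrightarrow> DERIV (f \<sigma>) t :> f' \<sigma> t \<and> DERIV (g \<sigma>) t :> g' \<sigma> t" by meson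
  with mult.hyps show ?case
    by (intro exI[of _ "\<lambda>\<sigma> t. f' \<sigma> t * g \<sigma> t + g' \<sigma> t * f \<sigma> t"])
       (auto intro: ymix_alg.add ymix_alg.mult DERIV_mult)
qed

lemma ymix_alg_derivatives:
  assumes "ymix_alg s \<Phi>"
  obtains d where "d 0 = \<Phi>" and "\<And>m. ymix_alg s (d m)"
    and "\<And>m \<sigma> t. t \<in> ball c \<delta> \<Longrightarrow> DERIV (d m \<sigma>) t :> d (Suc m) \<sigma> t"
proof -
  obtain next_deriv where next_deriv: "\<And>\<Psi>. ymix_alg s \<Psi> \<Longrightarrow> ymix_alg s (next_deriv \<Psi>) \<and>
      (\<forall>\<sigma> t. t \<in> ball c \<delta> \<longrightarrow> DERIV (\<Psi> \<sigma>) t :> next_deriv \<Psi> \<sigma> t)"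
    using ymix_alg_deriv by metis
  have alg: "ymix_alg s ((next_deriv ^^ m) \<Phi>)" for m
    by (induction m) (simp_all add: assms next_deriv)
  show ?thesis
    by (rule that[of "\<lambda>m. (next_deriv ^^ m) \<Phi>"]) (use alg next_deriv in auto)
qed

definition interp_error_le :: "nat \<Rightarrow> (('s \<Rightarrow> real) \<Rightarrow> real \<Rightarrow> real) \<Rightarrow> real \<Rightarrow> bool" where
  "interp_error_le k \<Phi> M \<longleftrightarrow> (\<forall>\<sigma> t x \<rho> \<Lambda>. (\<forall>s. \<sigma> s \<in> ball c \<delta>) \<longrightarrow> t \<in> ball c \<delta> \<longrightarrow> inj_on x {..<k} \<longrightarrow>
     (\<forall>j<k. x j \<in> ball c \<delta> \<and> \<bar>x j - t\<bar> \<le> \<rho> \<and> \<bar>lagr k x j t\<bar> \<le> \<Lambda>) \<longrightarrow>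
     \<bar>(\<Sum>j<k. lagr k x j t * \<Phi> \<sigma> (x j)) - \<Phi> \<sigma> t\<bar> \<le> k * \<Lambda> * M / fact k * \<rho> ^ k)"

lemma interp_error_leD:
  assumes "interp_error_le k \<Phi> M" and "\<forall>s. \<sigma> s \<in> ball c \<delta>" and "t \<in> ball c \<delta>" and "inj_on x {..<k}"
    and "\<And>j. j < k \<Longrightarrow> x j \<in> ball c \<delta> \<and> \<bar>x j - t\<bar> \<le> \<rho> \<and> \<bar>lagr k x j t\<bar> \<le> \<Lambda>"
  shows "\<bar>(\<Sum>j<k. lagr k x j t * \<Phi> \<sigma> (x j)) - \<Phi> \<sigma> t\<bar> \<le> k * \<Lambda> * M / fact k * \<rho> ^ k"
  using assms unfolding interp_error_le_def by blast

lemma interp_error_le_mono: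
  assumes "interp_error_le k \<Phi> M" and "M \<le> M'" and "0 < k"
  shows "interp_error_le k \<Phi> M'"
  unfolding interp_error_le_def
proof (intro allI impI)
  fix \<sigma> :: "'s \<Rightarrow> real" and t \<rho> \<Lambda> :: real and x :: "nat \<Rightarrow> real"
  assume hyps: "\<forall>s. \<sigma> s \<in> ball c \<delta>" "t \<in> ball c \<delta>" "inj_on x {..<k}"
    "\<forall>j<k. x j \<in> ball c \<delta> \<and> \<bar>x j - t\<bar> \<le> \<rho> \<and> \<bar>lagr k x j t\<bar> \<le> \<Lambda>"
  then have "0 \<le> \<Lambda>" "0 \<le> \<rho>" using \<open>0 < k\<close> by (meson abs_ge_zero order.trans)+
  then have "k * \<Lambda> * M / fact k * \<rho> ^ k \<le> k * \<Lambda> * M' / fact k * \<rho> ^ k"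
    using \<open>M \<le> M'\<close> by (intro mult_right_mono divide_right_mono mult_left_mono) auto
  moreover have "\<bar>(\<Sum>j<k. lagr k x j t * \<Phi> \<sigma> (x j)) - \<Phi> \<sigma> t\<bar> \<le> k * \<Lambda> * M / fact k * \<rho> ^ k"
    using assms(1) hyps unfolding interp_error_le_def by blast
  ultimately show "\<bar>(\<Sum>j<k. lagr k x j t * \<Phi> \<sigma> (x j)) - \<Phi> \<sigma> t\<bar> \<le> k * \<Lambda> * M' / fact k * \<rho> ^ k"
    by linarith
qed

lemma ymix_alg_interp_error:
  assumes "ymix_alg s \<Phi>" and "0 < k"
  shows "\<exists>M. interp_error_le k \<Phi> M"
proof -
  obtain d where d: "d 0 = \<Phi>" "\<And>m. ymix_alg s (d m)"
    "\<And>m \<sigma> t. t \<in> ball c \<delta> \<Longrightarrow> DERIV (d m \<sigma>) t :> d (Suc m) \<sigma> t"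
    using ymix_alg_derivatives[OF assms(1)] by blast
  obtain M where M: "\<And>\<sigma> t. \<forall>s. \<sigma> s \<in> ball c \<delta> \<Longrightarrow> t \<in> ball c \<delta> \<Longrightarrow> \<bar>d k \<sigma> t\<bar> \<le> M"
    using ymix_alg_bounded[OF d(2)] by blast
  have "interp_error_le k \<Phi> M"
    unfolding interp_error_le_def
  proof (intro allI impI)
    fix \<sigma> :: "'s \<Rightarrow> real" and t \<rho> \<Lambda> :: real and x :: "nat \<Rightarrow> real"
    assume \<sigma>: "\<forall>s. \<sigma> s \<in> ball c \<delta>" and "t \<in> ball c \<delta>" and "inj_on x {..<k}"
      and nodes: "\<forall>j<k. x j \<in> ball c \<delta> \<and> \<bar>x j - t\<bar> \<le> \<rho> \<and> \<bar>lagr k x j t\<bar> \<le> \<Lambda>"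
    show "\<bar>(\<Sum>j<k. lagr k x j t * \<Phi> \<sigma> (x j)) - \<Phi> \<sigma> t\<bar> \<le> k * \<Lambda> * M / fact k * \<rho> ^ k"
      by (rule lagr_interpolation_error[OF \<open>inj_on x {..<k}\<close> \<open>0 < k\<close> convex_ball, where diff="\<lambda>m. d m \<sigma>"])
         (use d M[OF \<sigma>] \<open>t \<in> ball c \<delta>\<close> nodes in auto)
  qed
  then show ?thesis ..
qed

end

lemma local_solution_exists:
  fixes D :: "real^'n \<Rightarrow> real^'n" and y :: "real \<Rightarrow> real^'n"
  assumes "smooth_vf D" and "open T" and "c \<in> T" and "\<forall>t\<in>T. (y has_vector_derivative D (y t)) (at t)"
  shows "\<exists>\<delta>. local_solution D y c \<delta>"
proof -
  obtain \<delta>0 where "0 < \<delta>0" "ball c \<delta>0 \<subseteq> T" using assms(2,3) open_contains_ball by blast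
  have "continuous (at c) y"
    using assms(3,4) has_vector_derivative_continuous by blast
  then obtain \<delta>1 where "0 < \<delta>1" and \<delta>1: "\<And>t. dist t c < \<delta>1 \<Longrightarrow> dist (y t) (y c) < 1"
    unfolding continuous_at_eps_delta by (meson zero_less_one)
  have "local_solution D y c (min \<delta>0 \<delta>1)"
  proof
    show "(y has_vector_derivative D (y t)) (at t)" if "t \<in> ball c (min \<delta>0 \<delta>1)" for t
      using that \<open>ball c \<delta>0 \<subseteq> T\<close> assms(4) by auto
    show "\<bar>y t $ i - y c $ i\<bar> \<le> 1" if "t \<in> ball c (min \<delta>0 \<delta>1)" for t i
    proof -
      have "dist t c < \<delta>1" using that by (simp add: dist_commute)
      then have "norm (y t - y c) < 1" using \<delta>1 by (simp add: dist_norm)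
      then show ?thesis using component_le_norm_cart[of "y t - y c" i] by simp
    qed
  qed (use assms(1) \<open>0 < \<delta>0\<close> \<open>0 < \<delta>1\<close> in auto)
  then show ?thesis ..
qed

section \<open>Error of one substep\<close>

locale step_pattern = local_solution D y blk c \<delta>
  for D :: "real^'n \<Rightarrow> real^'n" and y :: "real \<Rightarrow> real^'n" and blk :: "'n \<Rightarrow> 's::finite"
    and c \<delta> :: real +
  fixes k :: nat and a1 :: real and a :: "nat \<Rightarrow> real" and b :: "'s \<Rightarrow> nat \<Rightarrow> real"
  assumes k_pos: "0 < k"
    and a_decreasing: "\<forall>i. Suc i < k \<longrightarrow> a (Suc i) < a i"
    and b_decreasing: "\<forall>s j. Suc j < k \<longrightarrow> b s (Suc j) < b s j"
    and a0_less_a1: "a 0 < a1"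
begin

definition tnext :: "real \<Rightarrow> real" where "tnext h = c + h * a1"
definition tpast :: "real \<Rightarrow> nat \<Rightarrow> real" where "tpast h = (\<lambda>i. c + h * a i)"
definition tset :: "real \<Rightarrow> 's \<Rightarrow> nat \<Rightarrow> real" where "tset h = (\<lambda>s j. c + h * b s j)"

definition node_bound :: real where
  "node_bound = \<bar>a1\<bar> + (\<Sum>i<k. \<bar>a i\<bar>) + (\<Sum>s\<in>UNIV. \<Sum>j<k. \<bar>b s j\<bar>)"

lemma
  shows abs_a1_le: "\<bar>a1\<bar> \<le> node_bound"
    and abs_a_le: "i < k \<Longrightarrow> \<bar>a i\<bar> \<le> node_bound" and abs_b_le: "j < k \<Longrightarrow> \<bar>b s j\<bar> \<le> node_bound"
proof -
  have sums: "0 \<le> (\<Sum>i<k. \<bar>a i\<bar>)" "0 \<le> (\<Sum>s\<in>UNIV. \<Sum>j<k. \<bar>b s j\<bar>)" by (simp_all add: sum_nonneg)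
  then show "\<bar>a1\<bar> \<le> node_bound" by (simp add: node_bound_def)
  show "\<bar>a i\<bar> \<le> node_bound" if "i < k"
    using member_le_sum[of i "{..<k}" "\<lambda>i. \<bar>a i\<bar>"] that sums unfolding node_bound_def by simp
  show "\<bar>b s j\<bar> \<le> node_bound" if "j < k"
  proof -
    have "\<bar>b s j\<bar> \<le> (\<Sum>j<k. \<bar>b s j\<bar>)" using that by (intro member_le_sum) auto
    also have "\<dots> \<le> (\<Sum>s\<in>UNIV. \<Sum>j<k. \<bar>b s j\<bar>)" by (intro member_le_sum sum_nonneg) auto
    finally show ?thesis using sums abs_ge_zero[of a1] unfolding node_bound_def by linarith
  qed
qed

lemma scaled_in_ball:
  assumes "0 < h" "h * node_bound < \<delta>" "\<bar>\<theta>\<bar> \<le> node_bound"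
  shows "c + h * \<theta> \<in> ball c \<delta>"
proof -
  have "\<bar>h * \<theta>\<bar> \<le> h * node_bound" using assms by (simp add: abs_mult)
  with assms show ?thesis by (simp add: dist_real_def)
qed

lemma scaled_dist_le:
  assumes "0 < h" "\<bar>\<theta>\<bar> \<le> node_bound" "\<bar>\<theta>'\<bar> \<le> node_bound"
  shows "\<bar>(c + h * \<theta>) - (c + h * \<theta>')\<bar> \<le> 2 * node_bound * h"
proof -
  have "\<bar>(c + h * \<theta>) - (c + h * \<theta>')\<bar> = h * \<bar>\<theta> - \<theta>'\<bar>"
    using assms by (simp add: abs_mult flip: right_diff_distrib)
  also have "\<dots> \<le> h * (2 * node_bound)" using assms by (intro mult_left_mono) auto
  finally show ?thesis by (simp add: mult_ac)
qed

lemma quadrature_node: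
  assumes "0 < h" "t \<in> {tpast h 0..tnext h}"
  obtains \<theta> where "t = c + h * \<theta>" "\<bar>\<theta>\<bar> \<le> node_bound"
proof
  show "t = c + h * ((t - c) / h)" using assms by simp
  have "a 0 \<le> (t - c) / h" "(t - c) / h \<le> a1"
    using assms by (auto simp: tpast_def tnext_def field_simps)
  then show "\<bar>(t - c) / h\<bar> \<le> node_bound"
    using abs_a_le[OF k_pos] abs_a1_le by (auto simp: abs_le_iff)
qed

definition lagr_bound :: real where
  "lagr_bound = (SOME \<Lambda>. 1 \<le> \<Lambda> \<and> (\<forall>\<theta>. \<bar>\<theta>\<bar> \<le> node_bound \<longrightarrow>
     (\<forall>i<k. \<bar>lagr k a i \<theta>\<bar> \<le> \<Lambda>) \<and> (\<forall>s. \<forall>j<k. \<bar>lagr k (b s) j \<theta>\<bar> \<le> \<Lambda>)))"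

lemma
  shows lagr_bound_ge_1: "1 \<le> lagr_bound"
    and abs_lagr_a_le: "\<bar>\<theta>\<bar> \<le> node_bound \<Longrightarrow> i < k \<Longrightarrow> \<bar>lagr k a i \<theta>\<bar> \<le> lagr_bound"
    and abs_lagr_b_le: "\<bar>\<theta>\<bar> \<le> node_bound \<Longrightarrow> j < k \<Longrightarrow> \<bar>lagr k (b s) j \<theta>\<bar> \<le> lagr_bound"
proof -
  let ?S = "{-node_bound..node_bound}"
  have "\<exists>B. \<forall>i\<in>{..<k}. \<forall>\<theta>\<in>?S. \<bar>lagr k a i \<theta>\<bar> \<le> B"
    by (rule ex_common_bound_finite) (simp_all add: bounded_lagr, meson order.trans)
  then obtain \<Lambda>a where \<Lambda>a: "\<forall>i\<in>{..<k}. \<forall>\<theta>\<in>?S. \<bar>lagr k a i \<theta>\<bar> \<le> \<Lambda>a" ..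
  have "\<exists>B. \<forall>p\<in>UNIV \<times> {..<k}. \<forall>\<theta>\<in>?S. \<bar>lagr k (b (fst p)) (snd p) \<theta>\<bar> \<le> B"
    by (rule ex_common_bound_finite) (simp_all add: bounded_lagr, meson order.trans)
  then obtain \<Lambda>b where \<Lambda>b: "\<forall>p\<in>UNIV \<times> {..<k}. \<forall>\<theta>\<in>?S. \<bar>lagr k (b (fst p)) (snd p) \<theta>\<bar> \<le> \<Lambda>b" ..
  have "\<exists>\<Lambda>. 1 \<le> \<Lambda> \<and> (\<forall>\<theta>. \<bar>\<theta>\<bar> \<le> node_bound \<longrightarrow>
     (\<forall>i<k. \<bar>lagr k a i \<theta>\<bar> \<le> \<Lambda>) \<and> (\<forall>s. \<forall>j<k. \<bar>lagr k (b s) j \<theta>\<bar> \<le> \<Lambda>))"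
  proof (intro exI[of _ "max 1 (max \<Lambda>a \<Lambda>b)"] conjI allI impI)
    fix \<theta> :: real assume "\<bar>\<theta>\<bar> \<le> node_bound"
    then have "\<theta> \<in> ?S" by (simp add: abs_le_iff)
    then show "\<bar>lagr k a i \<theta>\<bar> \<le> max 1 (max \<Lambda>a \<Lambda>b)" if "i < k" for i
      using \<Lambda>a that by (simp add: le_max_iff_disj)
    show "\<bar>lagr k (b s) j \<theta>\<bar> \<le> max 1 (max \<Lambda>a \<Lambda>b)" if "j < k" for s j
      using \<Lambda>b \<open>\<theta> \<in> ?S\<close> that by (force simp: le_max_iff_disj)
  qed simp
  from someI_ex[OF this] show "1 \<le> lagr_bound"
    "\<bar>\<theta>\<bar> \<le> node_bound \<Longrightarrow> i < k \<Longrightarrow> \<bar>lagr k a i \<theta>\<bar> \<le> lagr_bound"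
    "\<bar>\<theta>\<bar> \<le> node_bound \<Longrightarrow> j < k \<Longrightarrow> \<bar>lagr k (b s) j \<theta>\<bar> \<le> lagr_bound"
    unfolding lagr_bound_def by blast+
qed

lemma
  assumes "0 < h" "\<bar>\<theta>\<bar> \<le> node_bound"
  shows abs_lagr_tpast_le: "i < k \<Longrightarrow> \<bar>lagr k (tpast h) i (c + h * \<theta>)\<bar> \<le> lagr_bound"
    and abs_lagr_tset_le: "j < k \<Longrightarrow> \<bar>lagr k (tset h s) j (c + h * \<theta>)\<bar> \<le> lagr_bound"
  using assms lagr_affine[where h=h and c=c and x=a] lagr_affine[where h=h and c=c and x="b s"]
    abs_lagr_a_le abs_lagr_b_le
  by (simp_all add: tpast_def tset_def)

lemma inj_on_tpast: "h \<noteq> 0 \<Longrightarrow> inj_on (tpast h) {..<k}"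
  unfolding tpast_def by (rule inj_on_affine_decreasing[OF a_decreasing])

lemma inj_on_tset: "h \<noteq> 0 \<Longrightarrow> inj_on (tset h s) {..<k}"
  unfolding tset_def using b_decreasing by (intro inj_on_affine_decreasing) auto

definition interp_const :: real where
  "interp_const = (SOME M. (\<forall>s j. interp_error_le k (\<lambda>\<sigma> t. D (ymix (\<sigma>(s := t))) $ j) M) \<and>
                           (\<forall>j. interp_error_le k (\<lambda>\<sigma> t. D (y t) $ j) M))"

lemma
  shows interp_error_ymix: "interp_error_le k (\<lambda>\<sigma> t. D (ymix (\<sigma>(s := t))) $ j) interp_const"
    and interp_error_y: "interp_error_le k (\<lambda>\<sigma> t. D (y t) $ j) interp_const"
proof -
  have "\<exists>M. \<forall>p\<in>UNIV. interp_error_le k (\<lambda>\<sigma> t. D (ymix (\<sigma>(fst p := t))) $ snd p) M"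
  proof (rule ex_common_bound_finite)
    fix p :: "'s \<times> 'n"
    show "\<exists>M. interp_error_le k (\<lambda>\<sigma> t. D (ymix (\<sigma>(fst p := t))) $ snd p) M"
      using ymix_alg.partial_ymix[of "fst p" "[]", simplified] by (rule ymix_alg_interp_error[OF _ k_pos])
  qed (auto intro: interp_error_le_mono k_pos)
  then obtain M where M: "\<forall>p. interp_error_le k (\<lambda>\<sigma> t. D (ymix (\<sigma>(fst p := t))) $ snd p) M" by blast
  have "\<exists>N. \<forall>j\<in>UNIV. interp_error_le k (\<lambda>\<sigma> t. D (y t) $ j) N"
    using ymix_alg.partial_y[of undefined "[]", simplified]
    by (intro ex_common_bound_finite ymix_alg_interp_error[OF _ k_pos]) (auto intro: interp_error_le_mono k_pos)
  then obtain N where N: "\<forall>j. interp_error_le k (\<lambda>\<sigma> t. D (y t) $ j) N" by blast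
  have "\<exists>M. (\<forall>s j. interp_error_le k (\<lambda>\<sigma> t. D (ymix (\<sigma>(s := t))) $ j) M) \<and>
             (\<forall>j. interp_error_le k (\<lambda>\<sigma> t. D (y t) $ j) M)"
  proof (intro exI[of _ "max M N"] conjI allI)
    fix s j
    show "interp_error_le k (\<lambda>\<sigma> t. D (ymix (\<sigma>(s := t))) $ j) (max M N)"
      using M[rule_format, of "(s, j)"] by (intro interp_error_le_mono[OF _ max.cobounded1 k_pos]) simp
    show "interp_error_le k (\<lambda>\<sigma> t. D (y t) $ j) (max M N)"
      using N by (intro interp_error_le_mono[OF _ max.cobounded2 k_pos]) simp
  qed
  from someI_ex[OF this]
  show "interp_error_le k (\<lambda>\<sigma> t. D (ymix (\<sigma>(s := t))) $ j) interp_const"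
    "interp_error_le k (\<lambda>\<sigma> t. D (y t) $ j) interp_const"
    unfolding interp_const_def by blast+
qed

definition quad_weight :: "real \<Rightarrow> nat \<Rightarrow> real" where
  "quad_weight h i = integral {tpast h 0..tnext h} (lagr k (tpast h) i)"

definition tensor_weight :: "real \<Rightarrow> nat \<Rightarrow> ('s \<Rightarrow> nat) \<Rightarrow> real" where
  "tensor_weight h i J = (\<Prod>s\<in>UNIV. lagr k (tset h s) (J s) (tpast h i))"

definition tensor_sum_exact :: "real \<Rightarrow> nat \<Rightarrow> real^'n" where
  "tensor_sum_exact h i = (\<Sum>J\<in>{J. \<forall>s. J s < k}. tensor_weight h i J *\<^sub>R D (ymix (\<lambda>s. tset h s (J s))))"

definition tensor_sum :: "real \<Rightarrow> ('s \<Rightarrow> nat \<Rightarrow> real^'n) \<Rightarrow> nat \<Rightarrow> real^'n" where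
  "tensor_sum h Y i = (\<Sum>J\<in>{J. \<forall>s. J s < k}. tensor_weight h i J *\<^sub>R D (\<chi> l. Y (blk l) (J (blk l)) $ l))"

definition past_values_close :: "real \<Rightarrow> real \<Rightarrow> ('s \<Rightarrow> nat \<Rightarrow> real^'n) \<Rightarrow> bool" where
  "past_values_close CY h Y \<longleftrightarrow>
     (\<forall>s j l. j < k \<longrightarrow> blk l = s \<longrightarrow> \<bar>Y s j $ l - y (tset h s j) $ l\<bar> \<le> CY * h ^ k)"

lemma lts_substep_scaled:
  assumes "0 < h"
  shows "lts_substep k blk D (tnext h) (tpast h) (tset h) Y = (\<Sum>i<k. quad_weight h i *\<^sub>R tensor_sum h Y i)"
  using assms a0_less_a1
  by (simp add: lts_substep_eq_quadrature quad_weight_def tensor_sum_def tensor_weight_def tnext_def tpast_def)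

lemma abs_quad_weight_le:
  assumes "0 < h" "i < k"
  shows "\<bar>quad_weight h i\<bar> \<le> lagr_bound * (a1 - a 0) * h"
proof -
  have "\<bar>quad_weight h i\<bar> \<le> lagr_bound * (tnext h - tpast h 0)"
    unfolding quad_weight_def
  proof (rule abs_integral_lagr_le)
    show "tpast h 0 \<le> tnext h" using assms a0_less_a1 by (simp add: tpast_def tnext_def)
    fix t assume "t \<in> {tpast h 0..tnext h}"
    with quadrature_node[OF \<open>0 < h\<close>] obtain \<theta> where "t = c + h * \<theta>" "\<bar>\<theta>\<bar> \<le> node_bound" by blast
    with abs_lagr_tpast_le assms show "\<bar>lagr k (tpast h) i t\<bar> \<le> lagr_bound" by simp
  qed
  then show ?thesis by (simp add: tpast_def tnext_def algebra_simps)
qed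

lemma abs_tensor_weight_le:
  assumes "0 < h" "i < k" "\<forall>s. J s < k"
  shows "\<bar>tensor_weight h i J\<bar> \<le> lagr_bound ^ CARD('s)"
  unfolding tensor_weight_def abs_prod
  using abs_lagr_tset_le[OF \<open>0 < h\<close> abs_a_le[OF \<open>i < k\<close>]] assms lagr_bound_ge_1
  by (intro prod_le_power) (auto simp: tpast_def)

lemma tensor_sum_exact_component_error:
  assumes "0 < h" "h * node_bound < \<delta>" "i < k"
  shows "\<bar>(tensor_sum_exact h i - D (y (tpast h i))) $ j\<bar>
    \<le> CARD('s) * (k * lagr_bound) ^ CARD('s) * (k * lagr_bound * interp_const / fact k * (2 * node_bound * h) ^ k)"
proof -
  have in_ball: "c + h * \<theta> \<in> ball c \<delta>" if "\<bar>\<theta>\<bar> \<le> node_bound" for \<theta>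
    using scaled_in_ball assms that by blast
  have "\<bar>(\<Sum>J\<in>{J. \<forall>s. J s < k}. (\<Prod>s\<in>UNIV. lagr k (tset h s) (J s) (tpast h i)) * D (ymix (\<lambda>s. tset h s (J s))) $ j)
      - D (ymix (\<lambda>_. tpast h i)) $ j\<bar>
    \<le> CARD('s) * (k * lagr_bound) ^ CARD('s) * (k * lagr_bound * interp_const / fact k * (2 * node_bound * h) ^ k)"
  proof (rule tensor_interpolation_error[OF k_pos _ _ lagr_bound_ge_1, where V="ball c \<delta>"])
    show "(\<Sum>l<k. lagr k (tset h s) l (tpast h i)) = 1" for s
      using sum_lagr[OF inj_on_tset k_pos] \<open>0 < h\<close> by simp
    show "\<bar>lagr k (tset h s) l (tpast h i)\<bar> \<le> lagr_bound" if "l < k" for s l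
      using abs_lagr_tset_le[OF \<open>0 < h\<close> abs_a_le[OF \<open>i < k\<close>] that] by (simp add: tpast_def)
    show "tpast h i \<in> ball c \<delta>" using in_ball abs_a_le[OF \<open>i < k\<close>] by (simp add: tpast_def)
    show "tset h s l \<in> ball c \<delta>" if "l < k" for s l using in_ball abs_b_le[OF that] by (simp add: tset_def)
    fix \<sigma> :: "'s \<Rightarrow> real" and s assume "\<forall>s'. \<sigma> s' \<in> ball c \<delta>"
    then show "\<bar>(\<Sum>l<k. lagr k (tset h s) l (tpast h i) * D (ymix (\<sigma>(s := tset h s l))) $ j)
        - D (ymix (\<sigma>(s := tpast h i))) $ j\<bar> \<le> k * lagr_bound * interp_const / fact k * (2 * node_bound * h) ^ k"
      using interp_error_leD[OF interp_error_ymix, where x="tset h s" and t="tpast h i"]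
        in_ball abs_a_le[OF \<open>i < k\<close>] abs_b_le inj_on_tset \<open>0 < h\<close>
        scaled_dist_le[OF \<open>0 < h\<close> abs_b_le abs_a_le[OF \<open>i < k\<close>]]
        abs_lagr_tset_le[OF \<open>0 < h\<close> abs_a_le[OF \<open>i < k\<close>]]
      by (simp add: tset_def tpast_def)
  qed
  then show ?thesis by (simp add: tensor_sum_exact_def tensor_weight_def)
qed

lemma tensor_sum_exact_error:
  "\<exists>C. \<forall>h i. 0 < h \<longrightarrow> h * node_bound < \<delta> \<longrightarrow> i < k \<longrightarrow> norm (tensor_sum_exact h i - D (y (tpast h i))) \<le> C * h ^ k"
proof (intro exI allI impI)
  fix h i assume "0 < h" "h * node_bound < \<delta>" "i < k"
  then have "norm (tensor_sum_exact h i - D (y (tpast h i)))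
      \<le> CARD('n) * (CARD('s) * (k * lagr_bound) ^ CARD('s) * (k * lagr_bound * interp_const / fact k * (2 * node_bound * h) ^ k))"
    by (intro norm_le_card_mult tensor_sum_exact_component_error)
  then show "norm (tensor_sum_exact h i - D (y (tpast h i)))
      \<le> CARD('n) * (CARD('s) * (k * lagr_bound) ^ CARD('s) * (k * lagr_bound * interp_const / fact k * (2 * node_bound) ^ k)) * h ^ k"
    by (simp add: power_mult_distrib mult_ac)
qed

lemma tensor_sum_perturbation_error:
  "\<exists>C. \<forall>h Y i. 0 < h \<longrightarrow> h * node_bound < \<delta> \<longrightarrow> CY * h ^ k \<le> 1 \<longrightarrow>
     past_values_close CY h Y \<longrightarrow> i < k \<longrightarrow>
     norm (tensor_sum h Y i - tensor_sum_exact h i) \<le> C * h ^ k"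
proof (intro exI allI impI)
  let ?JS = "{J :: 's \<Rightarrow> nat. \<forall>s. J s < k}"
  fix h Y i assume h: "0 < h" "h * node_bound < \<delta>" and "CY * h ^ k \<le> 1" and "i < k"
    and Y: "past_values_close CY h Y"
  have "norm (tensor_weight h i J *\<^sub>R (D (\<chi> l. Y (blk l) (J (blk l)) $ l) - D (ymix (\<lambda>s. tset h s (J s)))))
      \<le> lagr_bound ^ CARD('s) * (lip_const * (CARD('n) * (CY * h ^ k)))" if "J \<in> ?JS" for J
  proof -
    have "ymix (\<lambda>s. tset h s (J s)) \<in> cube 1"
      using that scaled_in_ball[OF h abs_b_le] by (intro ymix_in_cube) (simp add: tset_def)
    moreover have "\<bar>(\<chi> l. Y (blk l) (J (blk l)) $ l) $ l - ymix (\<lambda>s. tset h s (J s)) $ l\<bar> \<le> CY * h ^ k" for l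
      using Y that by (simp add: ymix_def past_values_close_def)
    ultimately have "norm (D (\<chi> l. Y (blk l) (J (blk l)) $ l) - D (ymix (\<lambda>s. tset h s (J s))))
        \<le> lip_const * (CARD('n) * (CY * h ^ k))"
      using \<open>CY * h ^ k \<le> 1\<close> by (rule norm_D_diff_le)
    then show ?thesis
      unfolding norm_scaleR using abs_tensor_weight_le[OF \<open>0 < h\<close> \<open>i < k\<close>] that lagr_bound_ge_1
      by (intro mult_mono) (auto intro: order.trans[OF norm_ge_zero])
  qed
  then have "norm (tensor_sum h Y i - tensor_sum_exact h i)
      \<le> (\<Sum>J\<in>?JS. lagr_bound ^ CARD('s) * (lip_const * (CARD('n) * (CY * h ^ k))))"
    unfolding tensor_sum_def tensor_sum_exact_def
    by (subst sum_subtractf[symmetric], subst scaleR_diff_right[symmetric]) (intro order.trans[OF norm_sum sum_mono])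
  then show "norm (tensor_sum h Y i - tensor_sum_exact h i)
      \<le> k ^ CARD('s) * lagr_bound ^ CARD('s) * lip_const * CARD('n) * CY * h ^ k"
    by (simp add: multi_index_eq_PiE card_PiE mult_ac)
qed

lemma quadrature_error:
  "\<exists>C. \<forall>h. 0 < h \<longrightarrow> h * node_bound < \<delta> \<longrightarrow>
     norm ((\<Sum>i<k. quad_weight h i *\<^sub>R D (y (tpast h i))) - (y (tnext h) - y (tpast h 0))) \<le> C * h ^ (k + 1)"
proof (intro exI allI impI)
  let ?\<epsilon> = "\<lambda>h. k * lagr_bound * interp_const / fact k * (2 * node_bound * h) ^ k"
  fix h assume h: "0 < h" "h * node_bound < \<delta>"
  have "norm ((\<Sum>i<k. quad_weight h i *\<^sub>R D (y (tpast h i))) - (y (tnext h) - y (tpast h 0)))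
      \<le> CARD('n) * ?\<epsilon> h * (tnext h - tpast h 0)"
    unfolding quad_weight_def
  proof (rule lagr_quadrature_error)
    show "tpast h 0 \<le> tnext h" using h a0_less_a1 by (simp add: tpast_def tnext_def)
    fix t assume "t \<in> {tpast h 0..tnext h}"
    with quadrature_node[OF \<open>0 < h\<close>] obtain \<theta> where t: "t = c + h * \<theta>" "\<bar>\<theta>\<bar> \<le> node_bound" by blast
    then have "t \<in> ball c \<delta>" using scaled_in_ball h by blast
    then show "(y has_vector_derivative D (y t)) (at t)" by (rule solution)
    have "\<bar>(\<Sum>i<k. lagr k (tpast h) i t * D (y (tpast h i)) $ j) - D (y t) $ j\<bar> \<le> ?\<epsilon> h" for j
      using interp_error_leD[OF interp_error_y, where \<sigma>="\<lambda>_. t" and x="tpast h" and t=t]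
        \<open>t \<in> ball c \<delta>\<close> inj_on_tpast scaled_in_ball[OF h abs_a_le] \<open>0 < h\<close>
        scaled_dist_le[OF \<open>0 < h\<close> abs_a_le t(2)] abs_lagr_tpast_le[OF \<open>0 < h\<close> t(2)]
      by (simp add: t(1) tpast_def)
    then show "norm ((\<Sum>i<k. lagr k (tpast h) i t *\<^sub>R D (y (tpast h i))) - D (y t)) \<le> CARD('n) * ?\<epsilon> h"
      by (intro norm_le_card_mult) simp
  qed
  then show "norm ((\<Sum>i<k. quad_weight h i *\<^sub>R D (y (tpast h i))) - (y (tnext h) - y (tpast h 0)))
      \<le> CARD('n) * (k * lagr_bound * interp_const / fact k * (2 * node_bound) ^ k) * (a1 - a 0) * h ^ (k + 1)"
    by (simp add: tpast_def tnext_def power_mult_distrib algebra_simps)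
qed

lemma norm_substep_error_le:
  assumes "0 < h"
  shows "norm (lts_substep k blk D (tnext h) (tpast h) (tset h) Y - (y (tnext h) - y (tpast h 0)))
    \<le> (\<Sum>i<k. \<bar>quad_weight h i\<bar> * (norm (tensor_sum h Y i - tensor_sum_exact h i)
                                    + norm (tensor_sum_exact h i - D (y (tpast h i)))))
      + norm ((\<Sum>i<k. quad_weight h i *\<^sub>R D (y (tpast h i))) - (y (tnext h) - y (tpast h 0)))"
proof -
  let ?g = "\<lambda>i. D (y (tpast h i))"
  have "lts_substep k blk D (tnext h) (tpast h) (tset h) Y - (y (tnext h) - y (tpast h 0))
      = (\<Sum>i<k. quad_weight h i *\<^sub>R (tensor_sum h Y i - ?g i))
        + ((\<Sum>i<k. quad_weight h i *\<^sub>R ?g i) - (y (tnext h) - y (tpast h 0)))"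
    using assms by (simp add: lts_substep_scaled scaleR_diff_right sum_subtractf)
  then have "norm (lts_substep k blk D (tnext h) (tpast h) (tset h) Y - (y (tnext h) - y (tpast h 0)))
      \<le> norm (\<Sum>i<k. quad_weight h i *\<^sub>R (tensor_sum h Y i - ?g i))
        + norm ((\<Sum>i<k. quad_weight h i *\<^sub>R ?g i) - (y (tnext h) - y (tpast h 0)))"
    by (simp only: norm_triangle_ineq)
  moreover have "norm (\<Sum>i<k. quad_weight h i *\<^sub>R (tensor_sum h Y i - ?g i))
      \<le> (\<Sum>i<k. \<bar>quad_weight h i\<bar> * (norm (tensor_sum h Y i - tensor_sum_exact h i)
                                     + norm (tensor_sum_exact h i - ?g i)))"
    by (intro order.trans[OF norm_sum sum_mono])
       (simp add: mult_left_mono norm_diff_triangle_le[OF order.refl order.refl])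
  ultimately show ?thesis by linarith
qed

lemma substep_error:
  "\<exists>K. \<forall>h Y. 0 < h \<longrightarrow> h * node_bound < \<delta> \<longrightarrow> CY * h ^ k \<le> 1 \<longrightarrow>
     past_values_close CY h Y \<longrightarrow>
     norm (lts_substep k blk D (tnext h) (tpast h) (tset h) Y - (y (tnext h) - y (tpast h 0))) \<le> K * h ^ (k + 1)"
proof -
  obtain Ca where Ca: "\<forall>h Y i. 0 < h \<longrightarrow> h * node_bound < \<delta> \<longrightarrow> CY * h ^ k \<le> 1 \<longrightarrow>
     past_values_close CY h Y \<longrightarrow> i < k \<longrightarrow>
     norm (tensor_sum h Y i - tensor_sum_exact h i) \<le> Ca * h ^ k"
    using tensor_sum_perturbation_error by blast
  obtain Ce where Ce: "\<forall>h i. 0 < h \<longrightarrow> h * node_bound < \<delta> \<longrightarrow> i < k \<longrightarrow>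
     norm (tensor_sum_exact h i - D (y (tpast h i))) \<le> Ce * h ^ k"
    using tensor_sum_exact_error by blast
  obtain Cy where Cy: "\<forall>h. 0 < h \<longrightarrow> h * node_bound < \<delta> \<longrightarrow>
     norm ((\<Sum>i<k. quad_weight h i *\<^sub>R D (y (tpast h i))) - (y (tnext h) - y (tpast h 0))) \<le> Cy * h ^ (k + 1)"
    using quadrature_error by blast
  define Cq where "Cq = lagr_bound * (a1 - a 0)"
  have "0 \<le> Cq" using lagr_bound_ge_1 a0_less_a1 by (simp add: Cq_def)
  show ?thesis
  proof (intro exI[of _ "k * Cq * (Ca + Ce) + Cy"] allI impI)
    fix h Y assume h: "0 < h" "h * node_bound < \<delta>" and Y: "CY * h ^ k \<le> 1" "past_values_close CY h Y"
    have "(\<Sum>i<k. \<bar>quad_weight h i\<bar> * (norm (tensor_sum h Y i - tensor_sum_exact h i)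
                                    + norm (tensor_sum_exact h i - D (y (tpast h i)))))
        \<le> (\<Sum>i<k. Cq * h * (Ca * h ^ k + Ce * h ^ k))"
      using Ca Ce h Y abs_quad_weight_le[OF \<open>0 < h\<close>] \<open>0 \<le> Cq\<close>
      by (intro sum_mono mult_mono add_mono) (auto simp: Cq_def)
    with norm_substep_error_le[OF \<open>0 < h\<close>, of Y] Cy h
    show "norm (lts_substep k blk D (tnext h) (tpast h) (tset h) Y - (y (tnext h) - y (tpast h 0)))
        \<le> (k * Cq * (Ca + Ce) + Cy) * h ^ (k + 1)"
      by (fastforce simp: algebra_simps)
  qed
qed

lemma eventually_substep_error:
  "\<exists>K. \<forall>\<^sub>F h in at_right 0. \<forall>Y. past_values_close CY h Y \<longrightarrow>
     norm (lts_substep k blk D (tnext h) (tpast h) (tset h) Y - (y (tnext h) - y (tpast h 0))) \<le> K * h ^ (k + 1)"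
proof -
  obtain K where K: "\<forall>h Y. 0 < h \<longrightarrow> h * node_bound < \<delta> \<longrightarrow> CY * h ^ k \<le> 1 \<longrightarrow> past_values_close CY h Y \<longrightarrow>
     norm (lts_substep k blk D (tnext h) (tpast h) (tset h) Y - (y (tnext h) - y (tpast h 0))) \<le> K * h ^ (k + 1)"
    using substep_error by blast
  have "((\<lambda>h. h * node_bound) \<longlongrightarrow> 0) (at_right 0)" "((\<lambda>h. CY * h ^ k) \<longlongrightarrow> 0) (at_right 0)"
    using k_pos by (auto intro!: tendsto_eq_intros)
  from order_tendstoD(2)[OF this(1) radius_pos] order_tendstoD(2)[OF this(2) zero_less_one]
    eventually_at_right_less
  have "\<forall>\<^sub>F h in at_right 0. 0 < h \<and> h * node_bound < \<delta> \<and> CY * h ^ k \<le> 1"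
    by eventually_elim auto
  then show ?thesis using K by (intro exI[of _ K]) (auto elim!: eventually_mono)
qed

end

theorem mainTheorem2:
  fixes D :: "real^'n \<Rightarrow> real^'n"
    and blk :: "'n \<Rightarrow> 's::finite"
    and y :: "real \<Rightarrow> real^'n"
    and T :: "real set" and c :: real and k :: nat
    and a1 :: real and a :: "nat \<Rightarrow> real" and b :: "'s \<Rightarrow> nat \<Rightarrow> real"
    and Y :: "real \<Rightarrow> 's \<Rightarrow> nat \<Rightarrow> real^'n"
  assumes "k \<ge> 1"
    and "surj blk"
    and "smooth_vf D"
    and "open T" and "c \<in> T"
    and "\<forall>t\<in>T. (y has_vector_derivative D (y t)) (at t)"
    and "a 0 < a1"
    and "\<forall>i. Suc i < k \<longrightarrow> a (Suc i) < a i"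
    and "\<forall>s j. Suc j < k \<longrightarrow> b s (Suc j) < b s j"
    and "\<forall>s. b s 0 \<le> a 0"
    and "\<forall>s j i. j < k \<longrightarrow> blk i = s \<longrightarrow>
           (\<lambda>h. Y h s j $ i - y (c + h * b s j) $ i) \<in> O[at_right 0](\<lambda>h. h ^ k)"
  shows "(\<lambda>h. norm (lts_substep k blk D (c + h * a1) (\<lambda>i. c + h * a i)
                        (\<lambda>s j. c + h * b s j) (Y h)
                   - (y (c + h * a1) - y (c + h * a 0))))
           \<in> O[at_right 0](\<lambda>h. h ^ (k + 1))"
proof -
  obtain \<delta> where "local_solution D y c \<delta>" using local_solution_exists[OF assms(3-6)] by blast
  then interpret step_pattern D y blk c \<delta> k a1 a b
    using assms(1,7-9) by (intro step_pattern.intro step_pattern_axioms.intro) auto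
  let ?P = "{(s, j, i). j < k \<and> blk i = s}"
  have "finite ?P" by (rule finite_subset[of _ "UNIV \<times> {..<k} \<times> UNIV"]) auto
  then obtain CY where CY: "\<forall>\<^sub>F h in at_right 0. \<forall>(s, j, i)\<in>?P.
      norm (Y h s j $ i - y (c + h * b s j) $ i) \<le> CY * norm (h ^ k)"
    using bigo_finite_family[of ?P "\<lambda>(s, j, i) h. Y h s j $ i - y (c + h * b s j) $ i" "at_right 0"] assms(11)
    by (force simp: case_prod_beta)
  obtain K where K: "\<forall>\<^sub>F h in at_right 0. \<forall>Y. past_values_close CY h Y \<longrightarrow>
     norm (lts_substep k blk D (tnext h) (tpast h) (tset h) Y - (y (tnext h) - y (tpast h 0))) \<le> K * h ^ (k + 1)"
    using eventually_substep_error by blast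
  show ?thesis
    by (rule bigoI[of _ K], use K CY eventually_at_right_less in eventually_elim)
       (auto simp: past_values_close_def tnext_def tpast_def tset_def)
qed

end
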